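(* The class of (partial) functions computed by unrestricted tree-to-tree Hennie machines and the class of (partial) functions computed by tree-to-tree Hennie machines are both closed under precomposition by MSO relabelings: if $f:T_\Sigma\rightharpoonup T_\Gamma$ is computed by a uTHM (resp.\ a THM) and $g:T_\Delta\to T_\Sigma$ is an MSO relabeling, then $f\circ g$ is computed by a uTHM (resp.\ a THM).
   Context: Trees: ranked alphabets are finite sets with a rank function to $\mathbb{N}$; $T_\Sigma$ is the set of finite ordered $\Sigma$-labeled trees where a node labeled $\sigma$ has $\mathrm{rank}(\sigma)$ children (nodes are words over positive integers, root $\varepsilon$, $i$-th child of $u$ is $ui$); $T_\Sigma[Y]$ allows extra rank-$0$ leaves labeled in $Y$. An MSO relabeling is a function that preserves the set of nodes of the input tree and changes labels in a way definable in monadic second-order logic: the new label of each node is determined by which of finitely many MSO formulas with one free first-order variable it satisfies (standard notion, e.g.\ Courcelle–Engelfriet). Hennie machines: a uTHM is $(Q,M,\top,\Sigma,\Gamma,q_{init},\delta)$ with finite states $Q$, finite memory symbols $M\ni\top$, $q_{init}\in Q$, partial $\delta:Q\times\Sigma\times M\rightharpoonup T_\Gamma[Q\times M\times D]$, $D=\{\uparrow,1,..,\max\mathrm{rank}\Sigma\}$, leaves $(q',m',d)$ of $\delta(q,\sigma,m)$ having $d\in\{\uparrow,1,..,\mathrm{rank}\sigma\}$. Configurations on $t$ are $(u,q,\mu)$, $\mu:$ nodes$\to M$, initially $(\varepsilon,q_{init},\text{constant }\top)$; the step of $(u,q,\mu)$ is $\delta(q,\mathrm{lab}_t(u),\mu(u))$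 with each leaf $(q',m',d)$ replaced by $(ud,q',\mu[u\mapsto m'])$ ($ud$ the parent if $d=\uparrow$, else the $d$-th child; undefined if nonexistent). Confluent rewriting of configuration leaves by steps from the initial configuration yields the output in $T_\Gamma$, if any. A branch-outputting run is $C_0,..,C_n$ with $C_0$ initial and $C_{i+1}$ a leaf label of the step of $C_i$. A THM is a uTHM for which some $N$ bounds, for all inputs, runs and nodes $u$, the number of $i$ with $C_i$ positioned at $u$. *)

theory Defs
  imports Main
begin

datatype 'a rtree = Node 'a "'a rtree list"

text \<open>A ranked alphabet: a (finite) set of symbols together with a rank function.\<close>
type_synonym 'a ralph = "'a set \<times> ('a \<Rightarrow> nat)"

fun root_lab :: "'a rtree \<Rightarrow> 'a" where
  "root_lab (Node a ts) = a"

fun children :: "'a rtree \<Rightarrow> 'a rtree list" where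
  "children (Node a ts) = ts"

text \<open>Nodes are words over positive integers; root is the empty word and the
  i-th child of u is u @ [i] (i \<ge> 1).\<close>
fun is_node :: "'a rtree \<Rightarrow> nat list \<Rightarrow> bool" where
  "is_node t [] = True"
| "is_node (Node a ts) (i # v) = (1 \<le> i \<and> i \<le> length ts \<and> is_node (ts ! (i - 1)) v)"

definition nodes :: "'a rtree \<Rightarrow> nat list set" where
  "nodes t = {u. is_node t u}"

fun subt :: "'a rtree \<Rightarrow> nat list \<Rightarrow> 'a rtree" where
  "subt t [] = t"
| "subt (Node a ts) (i # v) = subt (ts ! (i - 1)) v"

definition lab :: "'a rtree \<Rightarrow> nat list \<Rightarrow> 'a" where
  "lab t u = root_lab (subt t u)"

fun wf_tree :: "'a ralph \<Rightarrow> 'a rtree \<Rightarrow> bool" where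
  "wf_tree A (Node a ts) = (a \<in> fst A \<and> length ts = snd A a \<and> list_all (wf_tree A) ts)"

text \<open>T_Gamma[Y], with Y-leaves encoded by labels Inr y.\<close>
fun wf_tree_Y :: "'c ralph \<Rightarrow> 'y set \<Rightarrow> ('c + 'y) rtree \<Rightarrow> bool" where
  "wf_tree_Y A Y (Node (Inl c) ts) = (c \<in> fst A \<and> length ts = snd A c \<and> list_all (wf_tree_Y A Y) ts)"
| "wf_tree_Y A Y (Node (Inr y) ts) = (y \<in> Y \<and> ts = [])"

text \<open>First-order variables and set variables are both indexed by nat
  (separate name spaces).\<close>
datatype 'a mso =
    Lab 'a nat
  | Child nat nat nat
  | Elem nat nat
  | EqF nat nat
  | Neg "'a mso"
  | Conj "'a mso" "'a mso"
  | ExF nat "'a mso"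
  | ExS nat "'a mso"

fun sat :: "'a rtree \<Rightarrow> 'a mso \<Rightarrow> (nat \<Rightarrow> nat list) \<Rightarrow> (nat \<Rightarrow> nat list set) \<Rightarrow> bool" where
  "sat t (Lab a x) vf vs = (lab t (vf x) = a)"
| "sat t (Child i x y) vf vs = (1 \<le> i \<and> vf y = vf x @ [i] \<and> vf y \<in> nodes t)"
| "sat t (Elem x X) vf vs = (vf x \<in> vs X)"
| "sat t (EqF x y) vf vs = (vf x = vf y)"
| "sat t (Neg \<phi>) vf vs = (\<not> sat t \<phi> vf vs)"
| "sat t (Conj \<phi> \<psi>) vf vs = (sat t \<phi> vf vs \<and> sat t \<psi> vf vs)"
| "sat t (ExF x \<phi>) vf vs = (\<exists>u \<in> nodes t. sat t \<phi> (vf(x := u)) vs)"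
| "sat t (ExS X \<phi>) vf vs = (\<exists>U \<subseteq> nodes t. sat t \<phi> vf (vs(X := U)))"

fun ffo :: "'a mso \<Rightarrow> nat set" where
  "ffo (Lab a x) = {x}"
| "ffo (Child i x y) = {x, y}"
| "ffo (Elem x X) = {x}"
| "ffo (EqF x y) = {x, y}"
| "ffo (Neg \<phi>) = ffo \<phi>"
| "ffo (Conj \<phi> \<psi>) = ffo \<phi> \<union> ffo \<psi>"
| "ffo (ExF x \<phi>) = ffo \<phi> - {x}"
| "ffo (ExS X \<phi>) = ffo \<phi>"

fun fso :: "'a mso \<Rightarrow> nat set" where
  "fso (Lab a x) = {}"
| "fso (Child i x y) = {}"
| "fso (Elem x X) = {X}"
| "fso (EqF x y) = {}"
| "fso (Neg \<phi>) = fso \<phi>"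
| "fso (Conj \<phi> \<psi>) = fso \<phi> \<union> fso \<psi>"
| "fso (ExF x \<phi>) = fso \<phi>"
| "fso (ExS X \<phi>) = fso \<phi> - {X}"

definition mso_relabeling :: "'d ralph \<Rightarrow> 'a ralph \<Rightarrow> ('d rtree \<Rightarrow> 'a rtree) \<Rightarrow> bool" where
  "mso_relabeling \<Delta> \<Sigma> g \<longleftrightarrow>
     (\<exists>\<phi> :: 'a \<Rightarrow> 'd mso.
        (\<forall>\<sigma> \<in> fst \<Sigma>. ffo (\<phi> \<sigma>) \<subseteq> {0} \<and> fso (\<phi> \<sigma>) = {}) \<and>
        (\<forall>t. wf_tree \<Delta> t \<longrightarrow>
             wf_tree \<Sigma> (g t) \<and> nodes (g t) = nodes t \<and>
             (\<forall>u \<in> nodes t. \<forall>\<sigma> \<in> fst \<Sigma>.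
                 lab (g t) u = \<sigma> \<longleftrightarrow> sat t (\<phi> \<sigma>) (\<lambda>_. u) (\<lambda>_. {}))))"

datatype dir = Up | Dn nat

record ('q, 'm, 'a, 'c) hm =
  hm_states :: "'q set"
  hm_mem :: "'m set"
  hm_top :: 'm
  hm_in :: "'a ralph"
  hm_outa :: "'c ralph"
  hm_init :: 'q
  hm_delta :: "'q \<Rightarrow> 'a \<Rightarrow> 'm \<Rightarrow> ('c + ('q \<times> 'm \<times> dir)) rtree option"

definition is_uTHM :: "('q, 'm, 'a, 'c) hm \<Rightarrow> bool" where
  "is_uTHM A \<longleftrightarrow>
     finite (hm_states A) \<and> finite (hm_mem A) \<and> hm_top A \<in> hm_mem A \<and>
     hm_init A \<in> hm_states A \<and> finite (fst (hm_in A)) \<and> finite (fst (hm_outa A)) \<and>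
     (\<forall>q \<sigma> m r. hm_delta A q \<sigma> m = Some r \<longrightarrow>
        q \<in> hm_states A \<and> \<sigma> \<in> fst (hm_in A) \<and> m \<in> hm_mem A \<and>
        wf_tree_Y (hm_outa A) (hm_states A \<times> hm_mem A \<times> UNIV) r \<and>
        (\<forall>q' m' i. Inr (q', m', Dn i) \<in> set_rtree r \<longrightarrow> 1 \<le> i \<and> i \<le> snd (hm_in A) \<sigma>))"

type_synonym ('q, 'm) conf = "nat list \<times> 'q \<times> (nat list \<Rightarrow> 'm)"

definition init_conf :: "('q, 'm, 'a, 'c) hm \<Rightarrow> ('q, 'm) conf" where
  "init_conf A = ([], hm_init A, (\<lambda>_. hm_top A))"

fun move :: "'a rtree \<Rightarrow> nat list \<Rightarrow> dir \<Rightarrow> nat list option" where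
  "move t u Up = (if u = [] then None else Some (butlast u))"
| "move t u (Dn i) = (if u @ [i] \<in> nodes t then Some (u @ [i]) else None)"

fun step :: "('q, 'm, 'a, 'c) hm \<Rightarrow> 'a rtree \<Rightarrow> ('q, 'm) conf
              \<Rightarrow> ('c + ('q, 'm) conf) rtree option" where
  "step A t (u, q, \<mu>) =
     (if u \<notin> nodes t then None else
      case hm_delta A q (lab t u) (\<mu> u) of
        None \<Rightarrow> None
      | Some r \<Rightarrow>
          (if \<forall>q' m' d. Inr (q', m', d) \<in> set_rtree r \<longrightarrow> move t u d \<noteq> None
           then Some (map_rtree (\<lambda>x. case x of
                          Inl c \<Rightarrow> Inl c
                        | Inr (q', m', d) \<Rightarrow> Inr (the (move t u d), q', \<mu>(u := m'))) r)
           else None))"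

inductive evalT :: "('q, 'm, 'a, 'c) hm \<Rightarrow> 'a rtree \<Rightarrow> ('c + ('q, 'm) conf) rtree \<Rightarrow> 'c rtree \<Rightarrow> bool"
  and evalC :: "('q, 'm, 'a, 'c) hm \<Rightarrow> 'a rtree \<Rightarrow> ('q, 'm) conf \<Rightarrow> 'c rtree \<Rightarrow> bool"
  for A t where
  evalT_out: "list_all2 (evalT A t) ts ss \<Longrightarrow> evalT A t (Node (Inl c) ts) (Node c ss)"
| evalT_conf: "evalC A t C s \<Longrightarrow> evalT A t (Node (Inr C) []) s"
| evalC_step: "step A t C = Some r \<Longrightarrow> evalT A t r s \<Longrightarrow> evalC A t C s"

definition hm_output :: "('q, 'm, 'a, 'c) hm \<Rightarrow> 'a rtree \<Rightarrow> 'c rtree option" where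
  "hm_output A t =
     (if \<exists>s. evalC A t (init_conf A) s then Some (THE s. evalC A t (init_conf A) s) else None)"

definition computes :: "('q, 'm, 'a, 'c) hm \<Rightarrow> ('a rtree \<Rightarrow> 'c rtree option) \<Rightarrow> bool" where
  "computes A f \<longleftrightarrow> (\<forall>t. wf_tree (hm_in A) t \<longrightarrow> hm_output A t = f t)"

definition branch_run :: "('q, 'm, 'a, 'c) hm \<Rightarrow> 'a rtree \<Rightarrow> ('q, 'm) conf list \<Rightarrow> bool" where
  "branch_run A t cs \<longleftrightarrow>
     cs \<noteq> [] \<and> hd cs = init_conf A \<and>
     (\<forall>i. Suc i < length cs \<longrightarrow>
        (\<exists>r. step A t (cs ! i) = Some r \<and> Inr (cs ! Suc i) \<in> set_rtree r))"

definition is_THM :: "('q, 'm, 'a, 'c) hm \<Rightarrow> bool" where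
  "is_THM A \<longleftrightarrow> is_uTHM A \<and>
     (\<exists>N::nat. \<forall>t cs u. wf_tree (hm_in A) t \<longrightarrow> branch_run A t cs \<longrightarrow>
        card {i. i < length cs \<and> fst (cs ! i) = u} \<le> N)"

end

theory Submission
  imports Defs "HOL-Library.Nat_Bijection" "HOL-Library.Sublist"
begin

text \<open>Every MSO formula is equivalent to a deterministic bottom-up tree automaton running on the tree
  marked by the values of the free variables. Hence the label that \<open>g\<close> gives to a node \<open>u\<close> is
  read off the final state of one automaton run on \<open>t\<close> with \<open>u\<close> marked, and that state is
  the context of \<open>u\<close> (the map from the state at \<open>u\<close> to the state at the root of the unmarked
  run) applied to the transition at \<open>u\<close>. A Hennie machine computes all of this in two depth-first
  traversals, storing the states at the children of each node in the first and passing the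
  tabulated context down in the second, and writes the label under \<open>g\<close> into the memory of each
  node; then it simulates the machine for \<open>f\<close>. Each traversal step strictly increases the memory
  of the node it leaves in a bounded order, so nodes are visited boundedly often before the
  simulation starts, and a visit bound for \<open>f\<close> yields one for \<open>f \<circ> g\<close>. Finally, states and
  memory symbols are renamed into natural numbers.\<close>

section \<open>Nodes and subtrees\<close>

lemma Nil_in_nodes [simp]: "[] \<in> nodes t"
  by (simp add: nodes_def)

lemma nodes_Node: "nodes (Node a ts) = insert [] (\<Union>i<length ts. (#) (Suc i) ` nodes (ts ! i))"
proof -
  have *: "i # p \<in> nodes (Node a ts) \<longleftrightarrow> i # p \<in> (\<Union>i<length ts. (#) (Suc i) ` nodes (ts ! i))" for i p
    by (cases i) (auto simp: nodes_def)
  show ?thesis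
  proof (rule set_eqI)
    show "p \<in> nodes (Node a ts) \<longleftrightarrow> p \<in> insert [] (\<Union>i<length ts. (#) (Suc i) ` nodes (ts ! i))" for p
      by (cases p) (simp_all add: *)
  qed
qed

lemma Cons_in_nodes_Node:
  "i # p \<in> nodes (Node a ts) \<longleftrightarrow> (\<exists>j. i = Suc j \<and> j < length ts \<and> p \<in> nodes (ts ! j))"
  by (auto simp: nodes_Node)

lemma finite_nodes: "finite (nodes t)"
  by (induction t) (auto simp: nodes_Node)

lemma lab_Nil [simp]: "lab (Node a ts) [] = a"
  by (simp add: lab_def)

lemma lab_Cons [simp]: "lab (Node a ts) (Suc i # p) = lab (ts ! i) p"
  by (simp add: lab_def)

definition nchildren :: "'a rtree \<Rightarrow> nat list \<Rightarrow> nat" where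
  "nchildren t u = length (children (subt t u))"

lemma subt_append: "subt t (u @ v) = subt (subt t u) v"
  by (induction t u rule: subt.induct) simp_all

lemma subt_child: "subt t (u @ [Suc j]) = children (subt t u) ! j"
  by (cases "subt t u") (simp add: subt_append)

lemma prefix_in_nodes: "u @ v \<in> nodes t \<Longrightarrow> u \<in> nodes t"
  by (induction t u rule: subt.induct) (auto simp: nodes_def)

lemma append_in_nodes_iff: "u \<in> nodes t \<Longrightarrow> u @ v \<in> nodes t \<longleftrightarrow> v \<in> nodes (subt t u)"
  by (induction t u rule: subt.induct) (auto simp: nodes_def)

lemma child_in_nodes_iff: "u \<in> nodes t \<Longrightarrow> u @ [j] \<in> nodes t \<longleftrightarrow> 1 \<le> j \<and> j \<le> nchildren t u"
  using append_in_nodes_iff[of u t "[j]"] by (cases "subt t u") (auto simp: nchildren_def nodes_def)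

lemma size_subt_child:
  assumes "u @ [Suc j] \<in> nodes t"
  shows "size (subt t (u @ [Suc j])) < size (subt t u)"
proof (cases "subt t u")
  case (Node a ts)
  then have "j < length ts"
    using assms child_in_nodes_iff[OF prefix_in_nodes[OF assms]] by (simp add: nchildren_def)
  then have "size (ts ! j) \<le> size_list size ts"
    by (rule size_list_estimation'[OF nth_mem]) simp
  then show ?thesis
    using Node by (simp add: subt_child)
qed

lemma strict_prefix_in_nodes_iff:
  assumes "v \<in> nodes t"
  shows "strict_prefix v w \<and> w \<in> nodes t \<longleftrightarrow>
    (\<exists>j<nchildren t v. prefix (v @ [Suc j]) w) \<and> w \<in> nodes t"
proof
  assume w: "strict_prefix v w \<and> w \<in> nodes t"
  then obtain i w' where w_eq: "w = v @ i # w'"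
    by (metis strict_prefixE' append_Cons)
  then have "v @ [i] \<in> nodes t"
    using w prefix_in_nodes[of "v @ [i]" w' t] by simp
  then obtain j where "i = Suc j" "j < nchildren t v"
    using child_in_nodes_iff[OF assms] by (cases i) auto
  then show "(\<exists>j<nchildren t v. prefix (v @ [Suc j]) w) \<and> w \<in> nodes t"
    using w w_eq by auto
qed (blast dest: prefix_snocD)

lemma wf_tree_subt: "wf_tree A t \<Longrightarrow> u \<in> nodes t \<Longrightarrow> wf_tree A (subt t u)"
  by (induction t u rule: subt.induct) (auto simp: Cons_in_nodes_Node list_all_length)

lemma wf_tree_lab: "wf_tree A t \<Longrightarrow> u \<in> nodes t \<Longrightarrow> lab t u \<in> fst A"
  using wf_tree_subt[of A t u] by (cases "subt t u") (simp add: lab_def)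

lemma wf_tree_nchildren: "wf_tree A t \<Longrightarrow> u \<in> nodes t \<Longrightarrow> nchildren t u = snd A (lab t u)"
  using wf_tree_subt[of A t u] by (cases "subt t u") (simp add: lab_def nchildren_def)

lemma nchildren_eq_if_nodes_eq:
  assumes "nodes t = nodes t'" "u \<in> nodes t"
  shows "nchildren t u = nchildren t' u"
proof -
  have "1 \<le> j \<and> j \<le> nchildren t u \<longleftrightarrow> 1 \<le> j \<and> j \<le> nchildren t' u" for j
    using child_in_nodes_iff[OF assms(2)] child_in_nodes_iff[of u t'] assms by simp
  from this[of "nchildren t u"] this[of "nchildren t' u"] show ?thesis
    by linarith
qed

lemma move_cong_nodes: "nodes t = nodes t' \<Longrightarrow> move t u d = move t' u d"
  by (cases d) simp_all

section \<open>Bottom-up tree automata for MSO formulas\<close>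

text \<open>The mark of a node lists the first-order variables denoting it and the set variables
  containing it. A deterministic bottom-up automaton with states in \<^typ>\<open>nat\<close> is represented by
  its transition function, reading the label and mark of a node and the states at its children.\<close>

type_synonym mark = "nat set \<times> nat set"
type_synonym 'd bta = "'d \<Rightarrow> mark \<Rightarrow> nat list \<Rightarrow> nat"

function bta_run :: "'d bta \<Rightarrow> (nat list \<Rightarrow> mark) \<Rightarrow> 'd rtree \<Rightarrow> nat" where
  "bta_run \<delta> mk (Node a ts) =
     \<delta> a (mk []) (map (\<lambda>i. bta_run \<delta> (\<lambda>p. mk (Suc i # p)) (ts ! i)) [0..<length ts])"
  by pat_completeness auto
termination
  apply (relation "measure (\<lambda>(_, _, t). size t)")
   apply auto
  by (meson le_imp_less_Suc nth_mem size_list_estimation' order.refl)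

lemma bta_run_cong: "(\<And>p. p \<in> nodes t \<Longrightarrow> mk p = mk' p) \<Longrightarrow> bta_run \<delta> mk t = bta_run \<delta> mk' t"
proof (induction t arbitrary: mk mk')
  case (Node a ts)
  have "bta_run \<delta> (\<lambda>p. mk (Suc i # p)) (ts ! i) = bta_run \<delta> (\<lambda>p. mk' (Suc i # p)) (ts ! i)"
    if "i < length ts" for i
    using that by (intro Node.IH) (auto intro: Node.prems simp: Cons_in_nodes_Node)
  then have children: "map (\<lambda>i. bta_run \<delta> (\<lambda>p. mk (Suc i # p)) (ts ! i)) [0..<length ts] =
      map (\<lambda>i. bta_run \<delta> (\<lambda>p. mk' (Suc i # p)) (ts ! i)) [0..<length ts]"
    by (intro map_cong) auto
  have root: "mk [] = mk' []"
    using Node.prems by simp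
  show ?case
    by (simp only: bta_run.simps children root)
qed

lemma bta_run_in: "(\<And>a m cs. \<delta> a m cs \<in> Q) \<Longrightarrow> bta_run \<delta> mk t \<in> Q"
  by (cases t) simp

definition var_mark :: "(nat \<Rightarrow> nat list) \<Rightarrow> (nat \<Rightarrow> nat list set) \<Rightarrow> nat list \<Rightarrow> mark" where
  "var_mark vf vs p = ({x. vf x = p}, {X. p \<in> vs X})"

definition bta_definable :: "'d mso \<Rightarrow> bool" where
  "bta_definable \<phi> \<longleftrightarrow> (\<exists>\<delta> acc (Q :: nat set). finite Q \<and> (\<forall>a m cs. \<delta> a m cs \<in> Q) \<and>
     (\<forall>t vf vs. (\<forall>x. vf x \<in> nodes t) \<longrightarrow> (sat t \<phi> vf vs \<longleftrightarrow> acc (bta_run \<delta> (var_mark vf vs) t))))"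

lemma bta_definableI:
  assumes "finite Q" "\<And>a m cs. \<delta> a m cs \<in> Q"
    and "\<And>t vf vs. \<forall>x. vf x \<in> nodes t \<Longrightarrow> sat t \<phi> vf vs \<longleftrightarrow> acc (bta_run \<delta> (var_mark vf vs) t)"
  shows "bta_definable \<phi>"
  unfolding bta_definable_def using assms by (intro exI[of _ \<delta>] exI[of _ acc] exI[of _ Q]) auto

lemma bex_nodes_Node:
  "(\<exists>p\<in>nodes (Node a ts). P p) \<longleftrightarrow> P [] \<or> (\<exists>i<length ts. \<exists>q\<in>nodes (ts ! i). P (Suc i # q))"
  by (auto simp: nodes_Node)

lemma bta_run_exists_node:
  assumes "\<And>a m cs. \<delta> a m cs = (if P a m \<or> 1 \<in> set cs then 1 else 0)"
  shows "bta_run \<delta> mk t = (if \<exists>p\<in>nodes t. P (lab t p) (mk p) then 1 else 0)"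
proof (induction t arbitrary: mk)
  case (Node a ts)
  show ?case
    by (subst bta_run.simps, subst assms, subst bex_nodes_Node) (use Node in \<open>auto split: if_splits\<close>)
qed

lemma bta_definable_if_sat_iff_ex_node:
  assumes "\<And>t vf vs. \<forall>x. vf x \<in> nodes t \<Longrightarrow>
    sat t \<phi> vf vs \<longleftrightarrow> (\<exists>p\<in>nodes t. P (lab t p) (var_mark vf vs p))"
  shows "bta_definable \<phi>"
proof -
  define \<delta> :: "'a bta" where "\<delta> a m cs = (if P a m \<or> 1 \<in> set cs then 1 else 0)" for a m cs
  show ?thesis
  proof (rule bta_definableI[where Q = "{0, 1}" and \<delta> = \<delta> and acc = "\<lambda>s. s = 1"])
    show "\<delta> a m cs \<in> {0, 1}" for a m cs
      by (simp add: \<delta>_def)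
    show "sat t \<phi> vf vs \<longleftrightarrow> bta_run \<delta> (var_mark vf vs) t = 1" if "\<forall>x. vf x \<in> nodes t" for t vf vs
      using that by (simp add: assms bta_run_exists_node[of \<delta> P, OF \<delta>_def])
  qed simp
qed

definition child_bta :: "nat \<Rightarrow> nat \<Rightarrow> nat \<Rightarrow> 'd bta" where
  "child_bta i x y a m cs =
     (if 1 \<in> set cs \<or> (x \<in> fst m \<and> 1 \<le> i \<and> i \<le> length cs \<and> cs ! (i - 1) = 2) then 1
      else if y \<in> fst m then 2 else 0)"

lemma ex_child_Node:
  "(\<exists>p. p @ [i] \<in> nodes (Node a ts) \<and> P p (p @ [i])) \<longleftrightarrow>
     (1 \<le> i \<and> i \<le> length ts \<and> P [] [i]) \<or>
     (\<exists>j<length ts. \<exists>p. p @ [i] \<in> nodes (ts ! j) \<and> P (Suc j # p) (Suc j # p @ [i]))"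
  (is "?L \<longleftrightarrow> ?R")
proof
  assume ?L
  then obtain p where "p @ [i] \<in> nodes (Node a ts)" "P p (p @ [i])"
    by blast
  then show ?R
    by (cases p) (auto simp: Cons_in_nodes_Node)
next
  assume ?R
  then show ?L
  proof
    assume "1 \<le> i \<and> i \<le> length ts \<and> P [] [i]"
    then have "[] @ [i] \<in> nodes (Node a ts) \<and> P [] ([] @ [i])"
      by (cases i) (auto simp: Cons_in_nodes_Node)
    then show ?L
      by blast
  next
    assume "\<exists>j<length ts. \<exists>p. p @ [i] \<in> nodes (ts ! j) \<and> P (Suc j # p) (Suc j # p @ [i])"
    then obtain j p where "j < length ts" "p @ [i] \<in> nodes (ts ! j)" "P (Suc j # p) (Suc j # p @ [i])"
      by blast
    then show ?L
      by (intro exI[of _ "Suc j # p"]) (simp add: Cons_in_nodes_Node)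
  qed
qed

lemma bta_run_child_bta:
  "bta_run (child_bta i x y) mk t =
     (if \<exists>p. p @ [i] \<in> nodes t \<and> 1 \<le> i \<and> x \<in> fst (mk p) \<and> y \<in> fst (mk (p @ [i])) then 1
      else if y \<in> fst (mk []) then 2 else 0)"
proof (induction t arbitrary: mk)
  case (Node a ts)
  define E where "E j \<longleftrightarrow>
    (\<exists>p. p @ [i] \<in> nodes (ts ! j) \<and> 1 \<le> i \<and> x \<in> fst (mk (Suc j # p)) \<and> y \<in> fst (mk (Suc j # p @ [i])))" for j
  define cs where "cs = map (\<lambda>j. bta_run (child_bta i x y) (\<lambda>p. mk (Suc j # p)) (ts ! j)) [0..<length ts]"
  have cs_nth: "cs ! j = (if E j then 1 else if y \<in> fst (mk [Suc j]) then 2 else 0)" if "j < length ts" for j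
    using Node.IH[OF nth_mem[OF that]] that by (simp add: cs_def E_def)
  have one: "1 \<in> set cs \<longleftrightarrow> (\<exists>j<length ts. E j)"
    using cs_nth by (auto simp: in_set_conv_nth cs_def split: if_splits)
  have two: "cs ! (i - 1) = 2 \<longleftrightarrow> \<not> E (i - 1) \<and> y \<in> fst (mk [i])" if "1 \<le> i" "i \<le> length ts"
    using cs_nth[of "i - 1"] that by auto
  have "1 \<in> set cs \<or> (x \<in> fst (mk []) \<and> 1 \<le> i \<and> i \<le> length cs \<and> cs ! (i - 1) = 2) \<longleftrightarrow>
      (1 \<le> i \<and> i \<le> length ts \<and> x \<in> fst (mk []) \<and> y \<in> fst (mk [i])) \<or> (\<exists>j<length ts. E j)"
  proof (cases "1 \<le> i \<and> i \<le> length ts \<and> E (i - 1)")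
    case True
    then have "\<exists>j<length ts. E j"
      by (intro exI[of _ "i - 1"]) auto
    then show ?thesis
      using one by blast
  next
    case False
    then show ?thesis
      using one two by (auto simp: cs_def)
  qed
  then have child: "child_bta i x y a (mk []) cs =
      (if (1 \<le> i \<and> i \<le> length ts \<and> x \<in> fst (mk []) \<and> y \<in> fst (mk [i])) \<or> (\<exists>j<length ts. E j) then 1
       else if y \<in> fst (mk []) then 2 else 0)"
    unfolding child_bta_def by presburger
  have ex: "(\<exists>p. p @ [i] \<in> nodes (Node a ts) \<and> 1 \<le> i \<and> x \<in> fst (mk p) \<and> y \<in> fst (mk (p @ [i]))) \<longleftrightarrow>
      (1 \<le> i \<and> i \<le> length ts \<and> x \<in> fst (mk []) \<and> y \<in> fst (mk [i])) \<or> (\<exists>j<length ts. E j)"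
    using ex_child_Node[of i a ts "\<lambda>p q. 1 \<le> i \<and> x \<in> fst (mk p) \<and> y \<in> fst (mk q)"]
    unfolding E_def by blast
  show ?case
    by (simp only: bta_run.simps flip: cs_def) (simp only: child ex)
qed

definition bta_pair :: "'d bta \<Rightarrow> 'd bta \<Rightarrow> 'd bta" where
  "bta_pair \<delta>1 \<delta>2 a m cs =
     prod_encode (\<delta>1 a m (map (fst \<circ> prod_decode) cs), \<delta>2 a m (map (snd \<circ> prod_decode) cs))"

lemma bta_run_pair: "bta_run (bta_pair \<delta>1 \<delta>2) mk t = prod_encode (bta_run \<delta>1 mk t, bta_run \<delta>2 mk t)"
proof (induction t arbitrary: mk)
  case (Node a ts)
  let ?runs = "\<lambda>\<delta>. map (\<lambda>i. bta_run \<delta> (\<lambda>p. mk (Suc i # p)) (ts ! i)) [0..<length ts]"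
  have "map (fst \<circ> prod_decode) (?runs (bta_pair \<delta>1 \<delta>2)) = ?runs \<delta>1"
    and "map (snd \<circ> prod_decode) (?runs (bta_pair \<delta>1 \<delta>2)) = ?runs \<delta>2"
    using Node.IH[OF nth_mem] by simp_all
  note children = this
  show ?case
    by (subst bta_run.simps, subst bta_pair_def) (simp only: children bta_run.simps)
qed

text \<open>Subset construction: the state of \<^term>\<open>bta_guess \<delta> upd\<close> is the encoded set of the states
  of \<open>\<delta>\<close> over all ways of guessing one bit per node, the bit modifying the mark by \<open>upd\<close>.\<close>

definition bta_guess :: "'d bta \<Rightarrow> (bool \<Rightarrow> mark \<Rightarrow> mark) \<Rightarrow> 'd bta" where
  "bta_guess \<delta> upd a m cs =
     set_encode {\<delta> a (upd b m) xs | b xs. list_all2 (\<lambda>x c. x \<in> set_decode c) xs cs}"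

lemma set_decode_bta_run_guess:
  assumes "finite Q" "\<And>a m cs. \<delta> a m cs \<in> Q"
  shows "set_decode (bta_run (bta_guess \<delta> upd) mk t) = {bta_run \<delta> (\<lambda>p. upd (B p) (mk p)) t | B. True}"
proof (induction t arbitrary: mk)
  case (Node a ts)
  define S where "S i = {bta_run \<delta> (\<lambda>p. upd (B p) (mk (Suc i # p))) (ts ! i) | B. True}" for i
  have IH: "set_decode (bta_run (bta_guess \<delta> upd) (\<lambda>p. mk (Suc i # p)) (ts ! i)) = S i"
    if "i < length ts" for i
    unfolding S_def by (rule Node.IH[OF nth_mem[OF that]])
  have children: "list_all2 (\<lambda>x c. x \<in> set_decode c) xs
      (map (\<lambda>i. bta_run (bta_guess \<delta> upd) (\<lambda>p. mk (Suc i # p)) (ts ! i)) [0..<length ts]) \<longleftrightarrow>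
    length xs = length ts \<and> (\<forall>i<length ts. xs ! i \<in> S i)" for xs
    unfolding list_all2_conv_all_nth by (auto simp: IH)
  have finite: "finite {\<delta> a (upd b (mk [])) xs | b xs. P b xs}" for P
    by (rule finite_subset[OF _ assms(1)]) (use assms(2) in blast)
  have run: "set_decode (bta_run (bta_guess \<delta> upd) mk (Node a ts)) =
      {\<delta> a (upd b (mk [])) xs | b xs. length xs = length ts \<and> (\<forall>i<length ts. xs ! i \<in> S i)}"
    by (subst bta_run.simps, subst bta_guess_def) (simp only: children set_encode_inverse[OF finite])
  have "{bta_run \<delta> (\<lambda>p. upd (B p) (mk p)) (Node a ts) | B. True} =
      {\<delta> a (upd b (mk [])) xs | b xs. length xs = length ts \<and> (\<forall>i<length ts. xs ! i \<in> S i)}"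
  proof (intro equalityI subsetI)
    fix z assume "z \<in> {bta_run \<delta> (\<lambda>p. upd (B p) (mk p)) (Node a ts) | B. True}"
    then obtain B where "z = bta_run \<delta> (\<lambda>p. upd (B p) (mk p)) (Node a ts)"
      by blast
    then show "z \<in> {\<delta> a (upd b (mk [])) xs | b xs. length xs = length ts \<and> (\<forall>i<length ts. xs ! i \<in> S i)}"
      by (intro CollectI exI[of _ "B []"]
          exI[of _ "map (\<lambda>i. bta_run \<delta> (\<lambda>p. upd (B (Suc i # p)) (mk (Suc i # p))) (ts ! i)) [0..<length ts]"])
        (auto simp: S_def)
  next
    fix z assume "z \<in> {\<delta> a (upd b (mk [])) xs | b xs. length xs = length ts \<and> (\<forall>i<length ts. xs ! i \<in> S i)}"
    then obtain b xs where z: "z = \<delta> a (upd b (mk [])) xs"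
      and xs: "length xs = length ts" "\<forall>i<length ts. xs ! i \<in> S i"
      by blast
    have "\<forall>i. \<exists>B. i < length ts \<longrightarrow> xs ! i = bta_run \<delta> (\<lambda>p. upd (B p) (mk (Suc i # p))) (ts ! i)"
      using xs(2) unfolding S_def by blast
    then obtain Bs where Bs: "\<And>i. i < length ts \<Longrightarrow> xs ! i = bta_run \<delta> (\<lambda>p. upd (Bs i p) (mk (Suc i # p))) (ts ! i)"
      by metis
    define B where "B p = (case p of [] \<Rightarrow> b | 0 # q \<Rightarrow> False | Suc i # q \<Rightarrow> Bs i q)" for p
    have "map (\<lambda>i. bta_run \<delta> (\<lambda>p. upd (B (Suc i # p)) (mk (Suc i # p))) (ts ! i)) [0..<length ts] = xs"
      by (rule nth_equalityI) (auto simp: xs(1) Bs B_def)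
    then have "z = bta_run \<delta> (\<lambda>p. upd (B p) (mk p)) (Node a ts)"
      unfolding z by (simp add: B_def)
    then show "z \<in> {bta_run \<delta> (\<lambda>p. upd (B p) (mk p)) (Node a ts) | B. True}"
      by blast
  qed
  then show ?case
    by (simp only: run)
qed

definition count2_bta :: "nat \<Rightarrow> 'd bta" where
  "count2_bta x a m cs = min 2 ((if x \<in> fst m then 1 else 0) + sum_list cs)"

lemma card_nodes_Node:
  "card {p \<in> nodes (Node a ts). P p} =
     (if P [] then 1 else 0) + (\<Sum>i<length ts. card {q \<in> nodes (ts ! i). P (Suc i # q)})"
proof -
  have split: "{p \<in> nodes (Node a ts). P p} = (if P [] then {[]} else {}) \<union>
      (\<Union>i<length ts. (#) (Suc i) ` {q \<in> nodes (ts ! i). P (Suc i # q)})"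
    by (auto simp: nodes_Node)
  have "card (\<Union>i<length ts. (#) (Suc i) ` {q \<in> nodes (ts ! i). P (Suc i # q)}) =
      (\<Sum>i<length ts. card {q \<in> nodes (ts ! i). P (Suc i # q)})"
    by (subst card_UN_disjoint) (auto simp: finite_nodes card_image)
  then show ?thesis
    unfolding split by (subst card_Un_disjoint) (auto simp: finite_nodes)
qed

lemma min2_sum_list: "min 2 (b + sum_list (map (min 2) xs)) = min 2 (b + sum_list (xs :: nat list))"
  by (induction xs arbitrary: b) (simp_all add: min_def add.assoc[symmetric])

lemma bta_run_count2: "bta_run (count2_bta x) mk t = min 2 (card {p \<in> nodes t. x \<in> fst (mk p)})"
proof (induction t arbitrary: mk)
  case (Node a ts)
  have children: "map (\<lambda>i. bta_run (count2_bta x) (\<lambda>p. mk (Suc i # p)) (ts ! i)) [0..<length ts] =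
      map (min 2) (map (\<lambda>i. card {q \<in> nodes (ts ! i). x \<in> fst (mk (Suc i # q))}) [0..<length ts])"
    using Node.IH[OF nth_mem] by simp
  show ?case
    apply (subst bta_run.simps, subst count2_bta_def, subst children, subst min2_sum_list, subst card_nodes_Node)
    apply (simp add: interv_sum_list_conv_sum_set_nat lessThan_atLeast0)
    done
qed

definition update_fo :: "nat \<Rightarrow> bool \<Rightarrow> mark \<Rightarrow> mark" where
  "update_fo x b m = (if b then insert x (fst m) else fst m - {x}, snd m)"

definition update_so :: "nat \<Rightarrow> bool \<Rightarrow> mark \<Rightarrow> mark" where
  "update_so X b m = (fst m, if b then insert X (snd m) else snd m - {X})"

lemma var_mark_fun_upd_fo: "var_mark (vf(x := u)) vs = (\<lambda>p. update_fo x (p = u) (var_mark vf vs p))"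
  by (auto simp: var_mark_def update_fo_def)

lemma var_mark_fun_upd_so: "var_mark vf (vs(X := U)) = (\<lambda>p. update_so X (p \<in> U) (var_mark vf vs p))"
  by (auto simp: var_mark_def update_so_def)

lemma ex_node_iff_ex_unique_guess:
  assumes "\<And>B B'. (\<And>p. p \<in> nodes t \<Longrightarrow> B p = B' p) \<Longrightarrow> R B = R B'"
  shows "(\<exists>u\<in>nodes t. R (\<lambda>p. p = u)) \<longleftrightarrow> (\<exists>B. R B \<and> card {p \<in> nodes t. B p} = 1)"
proof
  assume "\<exists>u\<in>nodes t. R (\<lambda>p. p = u)"
  then obtain u where "u \<in> nodes t" "R (\<lambda>p. p = u)"
    by blast
  moreover from \<open>u \<in> nodes t\<close> have "{p \<in> nodes t. p = u} = {u}"
    by auto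
  ultimately show "\<exists>B. R B \<and> card {p \<in> nodes t. B p} = 1"
    by (intro exI[of _ "\<lambda>p. p = u"]) simp
next
  assume "\<exists>B. R B \<and> card {p \<in> nodes t. B p} = 1"
  then obtain B u where B: "R B" "{p \<in> nodes t. B p} = {u}"
    by (auto simp: card_1_singleton_iff)
  moreover have "R B = R (\<lambda>p. p = u)"
    by (rule assms) (use B(2) in blast)
  ultimately have "R (\<lambda>p. p = u)"
    by simp
  moreover have "u \<in> nodes t"
    using B(2) by (metis (mono_tags) mem_Collect_eq singletonI)
  ultimately show "\<exists>u\<in>nodes t. R (\<lambda>p. p = u)"
    by (intro bexI[of _ u])
qed

lemma ex_subset_nodes_iff_ex_guess:
  assumes "\<And>B B'. (\<And>p. p \<in> nodes t \<Longrightarrow> B p = B' p) \<Longrightarrow> R B = R B'"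
  shows "(\<exists>U\<subseteq>nodes t. R (\<lambda>p. p \<in> U)) \<longleftrightarrow> (\<exists>B. R B)"
proof
  assume "\<exists>U\<subseteq>nodes t. R (\<lambda>p. p \<in> U)"
  then obtain U where "R (\<lambda>p. p \<in> U)"
    by (elim exE conjE)
  then show "\<exists>B. R B"
    by (rule exI[of R])
next
  assume "\<exists>B. R B"
  then obtain B where "R B" ..
  moreover have "R B = R (\<lambda>p. p \<in> {q \<in> nodes t. B q})"
    by (rule assms) simp
  ultimately have "R (\<lambda>p. p \<in> {q \<in> nodes t. B q})"
    by simp
  then show "\<exists>U\<subseteq>nodes t. R (\<lambda>p. p \<in> U)"
    by (intro exI[of _ "{q \<in> nodes t. B q}"] conjI) auto
qed

lemma bta_definable_Child: "bta_definable (Child i x y)"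
proof (rule bta_definableI[where Q = "{0, 1, 2}" and \<delta> = "child_bta i x y" and acc = "\<lambda>s. s = 1"])
  show "sat t (Child i x y) vf vs \<longleftrightarrow> bta_run (child_bta i x y) (var_mark vf vs) t = 1" for t :: "'a rtree" and vf vs
    by (subst bta_run_child_bta) (auto simp: var_mark_def)
qed (simp_all add: child_bta_def)

lemma bta_definable_Neg:
  assumes "bta_definable \<phi>"
  shows "bta_definable (Neg \<phi>)"
proof -
  obtain Q \<delta> acc where fin: "finite Q" and range: "\<forall>a m cs. \<delta> a m cs \<in> Q"
    and sat: "\<forall>t vf vs. (\<forall>x. vf x \<in> nodes t) \<longrightarrow> (sat t \<phi> vf vs \<longleftrightarrow> acc (bta_run \<delta> (var_mark vf vs) t))"
    using assms unfolding bta_definable_def by blast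
  show ?thesis
  proof (rule bta_definableI[where Q = Q and \<delta> = \<delta> and acc = "\<lambda>s. \<not> acc s"])
    show "sat t (Neg \<phi>) vf vs \<longleftrightarrow> \<not> acc (bta_run \<delta> (var_mark vf vs) t)"
      if "\<forall>x. vf x \<in> nodes t" for t vf vs
      using sat that by simp
  qed (use fin range in blast)+
qed

lemma bta_definable_Conj:
  assumes "bta_definable \<phi>" "bta_definable \<psi>"
  shows "bta_definable (Conj \<phi> \<psi>)"
proof -
  obtain Q1 \<delta>1 acc1 where 1: "finite Q1" "\<forall>a m cs. \<delta>1 a m cs \<in> Q1"
    "\<forall>t vf vs. (\<forall>x. vf x \<in> nodes t) \<longrightarrow> (sat t \<phi> vf vs \<longleftrightarrow> acc1 (bta_run \<delta>1 (var_mark vf vs) t))"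
    using assms(1) unfolding bta_definable_def by blast
  obtain Q2 \<delta>2 acc2 where 2: "finite Q2" "\<forall>a m cs. \<delta>2 a m cs \<in> Q2"
    "\<forall>t vf vs. (\<forall>x. vf x \<in> nodes t) \<longrightarrow> (sat t \<psi> vf vs \<longleftrightarrow> acc2 (bta_run \<delta>2 (var_mark vf vs) t))"
    using assms(2) unfolding bta_definable_def by blast
  show ?thesis
  proof (rule bta_definableI[where Q = "prod_encode ` (Q1 \<times> Q2)" and \<delta> = "bta_pair \<delta>1 \<delta>2"
        and acc = "\<lambda>s. acc1 (fst (prod_decode s)) \<and> acc2 (snd (prod_decode s))"])
    show "bta_pair \<delta>1 \<delta>2 a m cs \<in> prod_encode ` (Q1 \<times> Q2)" for a m cs
      by (simp add: bta_pair_def 1(2) 2(2))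
    show "sat t (Conj \<phi> \<psi>) vf vs \<longleftrightarrow>
        acc1 (fst (prod_decode (bta_run (bta_pair \<delta>1 \<delta>2) (var_mark vf vs) t))) \<and>
        acc2 (snd (prod_decode (bta_run (bta_pair \<delta>1 \<delta>2) (var_mark vf vs) t)))"
      if "\<forall>x. vf x \<in> nodes t" for t vf vs
      using 1(3) 2(3) that by (simp add: bta_run_pair)
  qed (use 1(1) 2(1) in simp)
qed

lemma mem_update_fo: "x \<in> fst (update_fo x b m) \<longleftrightarrow> b"
  by (simp add: update_fo_def)

lemma bta_definable_ExS:
  assumes "bta_definable \<phi>"
  shows "bta_definable (ExS X \<phi>)"
proof -
  obtain Q \<delta> acc where fin: "finite Q" and range: "\<And>a m cs. \<delta> a m cs \<in> Q"
    and sat: "\<forall>t vf vs. (\<forall>x. vf x \<in> nodes t) \<longrightarrow> (sat t \<phi> vf vs \<longleftrightarrow> acc (bta_run \<delta> (var_mark vf vs) t))"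
    using assms unfolding bta_definable_def by blast
  show ?thesis
  proof (rule bta_definableI[where Q = "set_encode ` Pow Q" and \<delta> = "bta_guess \<delta> (update_so X)"
        and acc = "\<lambda>s. \<exists>c\<in>set_decode s. acc c"])
    show "bta_guess \<delta> (update_so X) a m cs \<in> set_encode ` Pow Q" for a m cs
      unfolding bta_guess_def by (rule imageI) (use range in blast)
    show "sat t (ExS X \<phi>) vf vs \<longleftrightarrow> (\<exists>c\<in>set_decode (bta_run (bta_guess \<delta> (update_so X)) (var_mark vf vs) t). acc c)"
      if vf: "\<forall>x. vf x \<in> nodes t" for t vf vs
    proof -
      define R where "R B \<longleftrightarrow> acc (bta_run \<delta> (\<lambda>p. update_so X (B p) (var_mark vf vs p)) t)" for B
      have R_cong: "R B = R B'" if "\<And>p. p \<in> nodes t \<Longrightarrow> B p = B' p" for B B'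
        unfolding R_def by (subst bta_run_cong[where mk' = "\<lambda>p. update_so X (B' p) (var_mark vf vs p)"]) (simp_all add: that)
      have "sat t (ExS X \<phi>) vf vs \<longleftrightarrow> (\<exists>U\<subseteq>nodes t. R (\<lambda>p. p \<in> U))"
        using sat vf by (simp add: R_def var_mark_fun_upd_so)
      also have "\<dots> \<longleftrightarrow> (\<exists>B. R B)"
        using R_cong by (rule ex_subset_nodes_iff_ex_guess)
      also have "\<dots> \<longleftrightarrow> (\<exists>c\<in>set_decode (bta_run (bta_guess \<delta> (update_so X)) (var_mark vf vs) t). acc c)"
        by (auto simp: set_decode_bta_run_guess[OF fin range] R_def)
      finally show ?thesis .
    qed
  qed (simp add: fin)
qed

lemma bta_definable_ExF:
  assumes "bta_definable \<phi>"
  shows "bta_definable (ExF x \<phi>)"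
proof -
  obtain Q \<delta> acc where fin: "finite Q" and range: "\<And>a m cs. \<delta> a m cs \<in> Q"
    and sat: "\<forall>t vf vs. (\<forall>x. vf x \<in> nodes t) \<longrightarrow> (sat t \<phi> vf vs \<longleftrightarrow> acc (bta_run \<delta> (var_mark vf vs) t))"
    using assms unfolding bta_definable_def by blast
  define Q' where "Q' = prod_encode ` (Q \<times> {0, 1, 2})"
  define \<delta>' where "\<delta>' = bta_pair \<delta> (count2_bta x)"
  have fin': "finite Q'"
    using fin by (simp add: Q'_def)
  have range': "\<delta>' a m cs \<in> Q'" for a m cs
    using range[of a m] by (auto simp: Q'_def \<delta>'_def bta_pair_def count2_bta_def min_def)
  show ?thesis
  proof (rule bta_definableI[where Q = "set_encode ` Pow Q'" and \<delta> = "bta_guess \<delta>' (update_fo x)"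
        and acc = "\<lambda>s. \<exists>c\<in>set_decode s. acc (fst (prod_decode c)) \<and> snd (prod_decode c) = 1"])
    show "bta_guess \<delta>' (update_fo x) a m cs \<in> set_encode ` Pow Q'" for a m cs
      unfolding bta_guess_def by (rule imageI) (use range' in blast)
    show "sat t (ExF x \<phi>) vf vs \<longleftrightarrow> (\<exists>c\<in>set_decode (bta_run (bta_guess \<delta>' (update_fo x)) (var_mark vf vs) t).
        acc (fst (prod_decode c)) \<and> snd (prod_decode c) = 1)"
      if vf: "\<forall>x. vf x \<in> nodes t" for t vf vs
    proof -
      define R where "R B \<longleftrightarrow> acc (bta_run \<delta> (\<lambda>p. update_fo x (B p) (var_mark vf vs p)) t)" for B
      have R_cong: "R B = R B'" if "\<And>p. p \<in> nodes t \<Longrightarrow> B p = B' p" for B B'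
        unfolding R_def by (subst bta_run_cong[where mk' = "\<lambda>p. update_fo x (B' p) (var_mark vf vs p)"]) (simp_all add: that)
      have run': "bta_run \<delta>' (\<lambda>p. update_fo x (B p) (var_mark vf vs p)) t =
          prod_encode (bta_run \<delta> (\<lambda>p. update_fo x (B p) (var_mark vf vs p)) t, min 2 (card {p \<in> nodes t. B p}))"
        for B
        by (simp add: \<delta>'_def bta_run_pair bta_run_count2 mem_update_fo)
      have guesses: "(\<exists>c\<in>set_decode (bta_run (bta_guess \<delta>' (update_fo x)) (var_mark vf vs) t). P c) \<longleftrightarrow>
          (\<exists>B. P (bta_run \<delta>' (\<lambda>p. update_fo x (B p) (var_mark vf vs p)) t))" for P
        by (auto simp: set_decode_bta_run_guess[OF fin' range'])
      have min2: "min 2 c = Suc 0 \<longleftrightarrow> c = Suc 0" for c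
        by (simp add: min_def)
      have "sat t (ExF x \<phi>) vf vs \<longleftrightarrow> (\<exists>u\<in>nodes t. R (\<lambda>p. p = u))"
        using sat vf by (simp add: R_def var_mark_fun_upd_fo)
      also have "\<dots> \<longleftrightarrow> (\<exists>B. R B \<and> card {p \<in> nodes t. B p} = 1)"
        using R_cong by (rule ex_node_iff_ex_unique_guess)
      also have "\<dots> \<longleftrightarrow> (\<exists>c\<in>set_decode (bta_run (bta_guess \<delta>' (update_fo x)) (var_mark vf vs) t).
          acc (fst (prod_decode c)) \<and> snd (prod_decode c) = 1)"
        by (simp add: guesses run' min2 R_def)
      finally show ?thesis .
    qed
  qed (simp add: fin')
qed

theorem mso_bta_definable: "bta_definable \<phi>"
proof (induction \<phi>)
  case (Lab b x)
  show ?case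
    by (rule bta_definable_if_sat_iff_ex_node[where P = "\<lambda>a m. x \<in> fst m \<and> a = b"])
      (auto simp: var_mark_def)
next
  case (Elem x X)
  show ?case
    by (rule bta_definable_if_sat_iff_ex_node[where P = "\<lambda>a m. x \<in> fst m \<and> X \<in> snd m"])
      (auto simp: var_mark_def)
next
  case (EqF x y)
  show ?case
    by (rule bta_definable_if_sat_iff_ex_node[where P = "\<lambda>a m. x \<in> fst m \<and> y \<in> fst m"])
      (auto simp: var_mark_def)
qed (simp_all add: bta_definable_Child bta_definable_Neg bta_definable_Conj bta_definable_ExF
    bta_definable_ExS)

definition bta_tuple :: "(nat \<Rightarrow> 'd bta) \<Rightarrow> nat \<Rightarrow> 'd bta" where
  "bta_tuple \<delta>s K a m cs = list_encode (map (\<lambda>k. \<delta>s k a m (map (\<lambda>c. list_decode c ! k) cs)) [0..<K])"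

lemma bta_run_tuple:
  "bta_run (bta_tuple \<delta>s K) mk t = list_encode (map (\<lambda>k. bta_run (\<delta>s k) mk t) [0..<K])"
proof (induction t arbitrary: mk)
  case (Node a ts)
  have children: "map (\<lambda>c. list_decode c ! k) (map (\<lambda>i. bta_run (bta_tuple \<delta>s K) (\<lambda>p. mk (Suc i # p)) (ts ! i)) [0..<length ts])
     = map (\<lambda>i. bta_run (\<delta>s k) (\<lambda>p. mk (Suc i # p)) (ts ! i)) [0..<length ts]" if "k < K" for k
    using that Node.IH[OF nth_mem] by simp
  have "map (\<lambda>k. \<delta>s k a (mk []) (map (\<lambda>c. list_decode c ! k)
      (map (\<lambda>i. bta_run (bta_tuple \<delta>s K) (\<lambda>p. mk (Suc i # p)) (ts ! i)) [0..<length ts]))) [0..<K]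
     = map (\<lambda>k. bta_run (\<delta>s k) mk (Node a ts)) [0..<K]"
    by (rule map_cong[OF refl]) (simp only: children atLeastLessThan_iff set_upt bta_run.simps)
  then show ?case
    by (subst bta_run.simps, subst bta_tuple_def) (simp only:)
qed

definition node_mark :: "nat list \<Rightarrow> nat list \<Rightarrow> mark" where
  "node_mark u p = (if p = u then (UNIV, {}) else ({}, {}))"

lemma mso_relabeling_bta:
  assumes "finite (fst \<Sigma>)" and "mso_relabeling \<Delta> \<Sigma> g"
  shows "\<exists>(\<delta> :: 'd bta) N out. (\<forall>a m cs. \<delta> a m cs < N) \<and>
     (\<forall>t. wf_tree \<Delta> t \<longrightarrow> (\<forall>u\<in>nodes t. lab (g t) u = out (bta_run \<delta> (node_mark u) t)))"
proof -
  obtain \<phi> where relab: "\<forall>t. wf_tree \<Delta> t \<longrightarrow> wf_tree \<Sigma> (g t) \<and> nodes (g t) = nodes t \<and>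
         (\<forall>u \<in> nodes t. \<forall>\<sigma> \<in> fst \<Sigma>. lab (g t) u = \<sigma> \<longleftrightarrow> sat t (\<phi> \<sigma>) (\<lambda>_. u) (\<lambda>_. {}))"
    using assms(2) unfolding mso_relabeling_def by blast
  then have g: "wf_tree \<Sigma> (g t)" "nodes (g t) = nodes t" if "wf_tree \<Delta> t" for t
    using that by blast+
  have \<phi>: "lab (g t) u = \<sigma> \<longleftrightarrow> sat t (\<phi> \<sigma>) (\<lambda>_. u) (\<lambda>_. {})"
    if "wf_tree \<Delta> t" "u \<in> nodes t" "\<sigma> \<in> fst \<Sigma>" for t u \<sigma>
    using relab that by blast
  have "\<forall>\<sigma>. \<exists>\<delta> acc (Q :: nat set). finite Q \<and> (\<forall>a m cs. \<delta> a m cs \<in> Q) \<and>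
     (\<forall>t vf vs. (\<forall>x. vf x \<in> nodes t) \<longrightarrow> (sat t (\<phi> \<sigma>) vf vs \<longleftrightarrow> acc (bta_run \<delta> (var_mark vf vs) t)))"
    using mso_bta_definable unfolding bta_definable_def by blast
  then obtain \<delta>s accs Qs where fin: "\<And>\<sigma>. finite (Qs \<sigma>)" and range: "\<And>\<sigma> a m cs. \<delta>s \<sigma> a m cs \<in> Qs \<sigma>"
    and sat: "\<And>\<sigma> t vf vs. \<forall>x. vf x \<in> nodes t \<Longrightarrow> sat t (\<phi> \<sigma>) vf vs \<longleftrightarrow> accs \<sigma> (bta_run (\<delta>s \<sigma>) (var_mark vf vs) t)"
    by metis
  obtain L where L: "set L = fst \<Sigma>" "distinct L"
    using finite_distinct_list[OF assms(1)] by blast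
  define K where "K = length L"
  define \<delta> where "\<delta> = bta_tuple (\<lambda>k. \<delta>s (L ! k)) K"
  define QS where "QS = list_encode ` {xs. set xs \<subseteq> (\<Union>k<K. Qs (L ! k)) \<and> length xs = K}"
  have "finite QS"
    unfolding QS_def using fin by (intro finite_imageI finite_lists_length_eq) auto
  moreover have "\<delta> a m cs \<in> QS" for a m cs
  proof -
    have "\<delta>s (L ! k) a m cs' \<in> (\<Union>k<K. Qs (L ! k))" if "k < K" for k cs'
      using that range by blast
    then show ?thesis
      unfolding \<delta>_def bta_tuple_def QS_def by (auto intro!: imageI)
  qed
  ultimately have bound: "\<delta> a m cs < Suc (Max QS)" for a m cs
    using Max_ge le_imp_less_Suc by blast
  define out where "out s = (SOME \<sigma>. \<exists>k<K. \<sigma> = L ! k \<and> accs (L ! k) (list_decode s ! k))" for s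
  have "lab (g t) u = out (bta_run \<delta> (node_mark u) t)" if t: "wf_tree \<Delta> t" and u: "u \<in> nodes t" for t u
  proof -
    have "node_mark u = var_mark (\<lambda>_. u) (\<lambda>_. {})"
      by (auto simp: node_mark_def var_mark_def)
    then have acc: "accs (L ! k) (list_decode (bta_run \<delta> (node_mark u) t) ! k) \<longleftrightarrow> lab (g t) u = L ! k"
      if "k < K" for k
      using that u \<phi>[OF t u, of "L ! k"] sat[of "\<lambda>_. u" t "L ! k"] L(1) nth_mem[of k L]
      by (simp add: \<delta>_def bta_run_tuple K_def)
    have "lab (g t) u \<in> set L"
      using wf_tree_lab[OF g(1)[OF t]] g(2)[OF t] u L(1) by simp
    then obtain k where k: "k < K" "L ! k = lab (g t) u"
      by (auto simp: K_def in_set_conv_nth)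
    then have "\<exists>k<K. lab (g t) u = L ! k \<and> accs (L ! k) (list_decode (bta_run \<delta> (node_mark u) t) ! k)"
      using k acc[OF k(1)] by (intro exI[of _ k]) auto
    then show ?thesis
      unfolding out_def using acc by (intro some_equality[symmetric]) auto
  qed
  with bound show ?thesis
    by blast
qed

section \<open>Simulations between Hennie machines\<close>

definition leaf :: "'x \<Rightarrow> ('c + 'x) rtree" where
  "leaf x = Node (Inr x) []"

lemma set_rtree_leaf [simp]: "set_rtree (leaf x) = {Inr x}"
  by (simp add: leaf_def)

lemma wf_tree_Y_leaf [simp]: "wf_tree_Y A Y (leaf x) \<longleftrightarrow> x \<in> Y"
  by (simp add: leaf_def)

definition single_step :: "('q, 'm, 'a, 'c) hm \<Rightarrow> 'a rtree \<Rightarrow> ('q, 'm) conf \<Rightarrow> ('q, 'm) conf \<Rightarrow> bool" where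
  "single_step X t C C' \<longleftrightarrow> step X t C = Some (leaf C')"

lemma evalC_single_step:
  assumes "single_step X t C C'"
  shows "evalC X t C s \<longleftrightarrow> evalC X t C' s"
proof
  assume "evalC X t C s"
  then show "evalC X t C' s"
  proof cases
    case (evalC_step r)
    then have "evalT X t (leaf C') s"
      using assms by (simp add: single_step_def)
    then show ?thesis
      by cases (auto simp: leaf_def)
  qed
next
  assume "evalC X t C' s"
  then show "evalC X t C s"
    using assms by (auto simp: single_step_def leaf_def intro: evalC_step evalT_conf)
qed

lemma evalC_single_steps: "(single_step X t)\<^sup>*\<^sup>* C C' \<Longrightarrow> evalC X t C s \<longleftrightarrow> evalC X t C' s"
  by (induction rule: rtranclp_induct) (simp_all add: evalC_single_step)

lemma evalC_cong_step: "step X t C = step X t C' \<Longrightarrow> evalC X t C s \<longleftrightarrow> evalC X t C' s"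
  by (auto elim!: evalC.cases intro: evalC_step)

lemma step_cong:
  assumes "hm_delta X q (lab t u) (\<mu> u) = hm_delta X q' (lab t u) (\<mu>' u)"
    and "\<And>w. w \<noteq> u \<Longrightarrow> \<mu> w = \<mu>' w"
  shows "step X t (u, q, \<mu>) = step X t (u, q', \<mu>')"
proof -
  have upd: "\<mu>(u := m) = \<mu>'(u := m)" for m
    using assms(2) by auto
  show ?thesis
    unfolding step.simps assms(1) upd ..
qed

definition step_simulation :: "('q, 'm, 'a, 'c) hm \<Rightarrow> 'a rtree \<Rightarrow> ('p, 'n, 'b, 'c) hm \<Rightarrow> 'b rtree
    \<Rightarrow> (('q, 'm) conf \<Rightarrow> ('p, 'n) conf \<Rightarrow> bool) \<Rightarrow> bool" where
  "step_simulation X t Y t' R \<longleftrightarrow>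
     (\<forall>C C'. R C C' \<longrightarrow> rel_option (rel_rtree (rel_sum (=) R)) (step X t C) (step Y t' C'))"

lemma step_simulation_conversep:
  assumes "step_simulation X t Y t' R"
  shows "step_simulation Y t' X t (conversep R)"
  unfolding step_simulation_def
proof (intro allI impI)
  fix C C' assume "conversep R C C'"
  then have "rel_option (rel_rtree (rel_sum (=) R)) (step X t C') (step Y t' C)"
    using assms unfolding step_simulation_def by blast
  then have conv: "rel_option (conversep (rel_rtree (rel_sum (=) R))) (step Y t' C) (step X t C')"
    by (simp add: option.rel_conversep)
  have rel: "rel_rtree (rel_sum (=) (conversep R)) = conversep (rel_rtree (rel_sum (=) R))"
    by (metis conversep_eq sum.rel_conversep rtree.rel_conversep)
  show "rel_option (rel_rtree (rel_sum (=) (conversep R))) (step Y t' C) (step X t C')"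
    unfolding rel by (rule conv)
qed

lemma evalT_evalC_simulation:
  assumes "step_simulation X t Y t' R"
  shows "evalT X t r s \<Longrightarrow> rel_rtree (rel_sum (=) R) r r' \<Longrightarrow> evalT Y t' r' s"
    and "evalC X t C s \<Longrightarrow> R C C' \<Longrightarrow> evalC Y t' C' s"
proof (induction arbitrary: r' and C' rule: evalT_evalC.inducts)
  case (evalT_out ts ss c)
  obtain a ts' where r': "r' = Node a ts'"
    by (cases r')
  have "a = Inl c" and "list_all2 (rel_rtree (rel_sum (=) R)) ts ts'"
    using evalT_out.prems unfolding r' by (auto elim: rel_sum.cases)
  moreover have "list_all2 (evalT Y t') ts' ss"
    using evalT_out.IH calculation(2) by (auto simp: list_all2_conv_all_nth)
  ultimately show ?case
    unfolding r' by (simp add: evalT_evalC.evalT_out)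
next
  case (evalT_conf C s)
  obtain a ts' where r': "r' = Node a ts'"
    by (cases r')
  obtain C'' where "a = Inr C''" "R C C''" "ts' = []"
    using evalT_conf.prems unfolding r' by (auto elim: rel_sum.cases)
  then show ?case
    unfolding r' using evalT_conf.IH by (simp add: evalT_evalC.evalT_conf)
next
  case (evalC_step C r s)
  have "rel_option (rel_rtree (rel_sum (=) R)) (Some r) (step Y t' C')"
    using assms evalC_step.prems evalC_step(1) unfolding step_simulation_def by metis
  then obtain r'' where "step Y t' C' = Some r''" "rel_rtree (rel_sum (=) R) r r''"
    by (cases "step Y t' C'") auto
  then show ?case
    using evalC_step.IH by (blast intro: evalT_evalC.evalC_step)
qed

lemma evalC_simulation_iff:
  assumes "step_simulation X t Y t' R" "R C C'"
  shows "evalC X t C s \<longleftrightarrow> evalC Y t' C' s"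
proof
  show "evalC X t C s \<Longrightarrow> evalC Y t' C' s"
    using assms by (intro evalT_evalC_simulation(2)[OF assms(1)])
  show "evalC Y t' C' s \<Longrightarrow> evalC X t C s"
    using assms(2) by (intro evalT_evalC_simulation(2)[OF step_simulation_conversep[OF assms(1)]]) simp_all
qed

lemma rel_rtree_setD:
  assumes "rel_rtree Q r r'" "x \<in> set_rtree r"
  shows "\<exists>y\<in>set_rtree r'. Q x y"
  using assms
proof (induction r arbitrary: r')
  case (Node a ts)
  obtain b ts' where r': "r' = Node b ts'"
    by (cases r')
  have ab: "Q a b" and ts: "list_all2 (rel_rtree Q) ts ts'"
    using Node.prems(1) unfolding r' by auto
  show ?case
  proof (cases "x = a")
    case True
    then show ?thesis
      using ab r' by auto
  next
    case False
    then obtain i where i: "i < length ts" "x \<in> set_rtree (ts ! i)"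
      using Node.prems(2) by (auto simp: in_set_conv_nth)
    then have "rel_rtree Q (ts ! i) (ts' ! i)" "i < length ts'"
      using ts by (auto simp: list_all2_conv_all_nth)
    then obtain y where "y \<in> set_rtree (ts' ! i)" "Q x y"
      using Node.IH[OF nth_mem[OF i(1)] _ i(2)] by blast
    then show ?thesis
      unfolding r' using \<open>i < length ts'\<close> by (auto intro: nth_mem)
  qed
qed

lemma step_simulation_successor:
  assumes "step_simulation X t Y t' R" "R C C'" "step X t C = Some r" "Inr D \<in> set_rtree r"
  shows "\<exists>r' D'. step Y t' C' = Some r' \<and> Inr D' \<in> set_rtree r' \<and> R D D'"
proof -
  have "rel_option (rel_rtree (rel_sum (=) R)) (Some r) (step Y t' C')"
    using assms(1-3) unfolding step_simulation_def by metis
  then obtain r' where r': "step Y t' C' = Some r'" "rel_rtree (rel_sum (=) R) r r'"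
    by (cases "step Y t' C'") auto
  then obtain y where y: "y \<in> set_rtree r'" "rel_sum (=) R (Inr D) y"
    using rel_rtree_setD[OF r'(2) assms(4)] by blast
  obtain D' where "y = Inr D'" "R D D'"
    using y(2) by (cases y) auto
  then show ?thesis
    using r'(1) y(1) by blast
qed

fun step_chain :: "('q, 'm, 'a, 'c) hm \<Rightarrow> 'a rtree \<Rightarrow> ('q, 'm) conf list \<Rightarrow> bool" where
  "step_chain X t (C # D # cs) \<longleftrightarrow>
     (\<exists>r. step X t C = Some r \<and> Inr D \<in> set_rtree r) \<and> step_chain X t (D # cs)"
| "step_chain X t _ \<longleftrightarrow> True"

lemma step_chain_iff_nth:
  "step_chain X t cs \<longleftrightarrow>
     (\<forall>i. Suc i < length cs \<longrightarrow> (\<exists>r. step X t (cs ! i) = Some r \<and> Inr (cs ! Suc i) \<in> set_rtree r))"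
proof (induction X t cs rule: step_chain.induct)
  case (1 X t C D cs)
  show ?case
    unfolding step_chain.simps 1 by (auto simp: less_Suc_eq_0_disj)
qed auto

lemma branch_run_iff_step_chain: "branch_run X t cs \<longleftrightarrow> cs \<noteq> [] \<and> hd cs = init_conf X \<and> step_chain X t cs"
  unfolding branch_run_def step_chain_iff_nth by blast

lemma step_chain_drop: "step_chain X t cs \<Longrightarrow> step_chain X t (drop k cs)"
  unfolding step_chain_iff_nth by simp

lemma step_chain_cong_head: "step X t C = step X t C' \<Longrightarrow> step_chain X t (C # cs) \<Longrightarrow> step_chain X t (C' # cs)"
  by (cases cs) auto

lemma step_chain_simulation:
  assumes "step_simulation X t Y t' R"
  shows "step_chain X t (C # cs) \<Longrightarrow> R C C' \<Longrightarrow> \<exists>cs'. step_chain Y t' (C' # cs') \<and> list_all2 R cs cs'"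
proof (induction cs arbitrary: C C')
  case Nil
  then show ?case
    by (intro exI[of _ "[]"]) simp
next
  case (Cons D cs)
  obtain r where "step X t C = Some r" "Inr D \<in> set_rtree r" and chain: "step_chain X t (D # cs)"
    using Cons.prems(1) by auto
  then obtain r' D' where r': "step Y t' C' = Some r'" "Inr D' \<in> set_rtree r'" "R D D'"
    using step_simulation_successor[OF assms Cons.prems(2)] by blast
  obtain cs' where "step_chain Y t' (D' # cs')" "list_all2 R cs cs'"
    using Cons.IH[OF chain r'(3)] by blast
  then show ?case
    using r' by (intro exI[of _ "D' # cs'"]) auto
qed

lemma wf_tree_Y_setD: "wf_tree_Y A Y r \<Longrightarrow> Inr y \<in> set_rtree r \<Longrightarrow> y \<in> Y"
proof (induction r)
  case (Node a ts)
  then show ?case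
    by (cases a) (auto simp: list_all_iff)
qed

lemma wf_tree_Y_map:
  "wf_tree_Y A Y r \<Longrightarrow> (\<And>y. y \<in> Y \<Longrightarrow> f y \<in> Y') \<Longrightarrow> wf_tree_Y A Y' (map_rtree (map_sum id f) r)"
proof (induction r)
  case (Node a ts)
  then show ?case
    by (cases a) (auto simp: list_all_iff)
qed

lemma map_sum_id_eq_InrD: "map_sum id f x = Inr y \<Longrightarrow> \<exists>z. x = Inr z \<and> y = f z"
  by (cases x) auto

lemma step_leafD:
  assumes "step X t (u, q, \<mu>) = Some r" "Inr (u', q', \<mu>') \<in> set_rtree r"
  shows "\<exists>r0 m' d. hm_delta X q (lab t u) (\<mu> u) = Some r0 \<and> Inr (q', m', d) \<in> set_rtree r0 \<and>
           \<mu>' = \<mu>(u := m') \<and> move t u d = Some u'"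
proof -
  obtain r0 where r0: "u \<in> nodes t" "hm_delta X q (lab t u) (\<mu> u) = Some r0"
    and moves: "\<forall>q' m' d. Inr (q', m', d) \<in> set_rtree r0 \<longrightarrow> move t u d \<noteq> None"
    and r: "r = map_rtree (\<lambda>x. case x of Inl c \<Rightarrow> Inl c | Inr (q', m', d) \<Rightarrow> Inr (the (move t u d), q', \<mu>(u := m'))) r0"
    using assms(1) by (auto split: if_splits option.splits)
  obtain x where x: "x \<in> set_rtree r0"
    "(case x of Inl c \<Rightarrow> Inl c | Inr (q', m', d) \<Rightarrow> Inr (the (move t u d), q', \<mu>(u := m'))) = Inr (u', q', \<mu>')"
    using assms(2) unfolding r by (auto simp: rtree.set_map)
  then obtain m' d where "x = Inr (q', m', d)" "u' = the (move t u d)" "\<mu>' = \<mu>(u := m')"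
    by (auto split: sum.splits)
  then show ?thesis
    using r0 x(1) moves by (intro exI[of _ r0] exI[of _ m'] exI[of _ d]) auto
qed

lemma step_leaf:
  assumes "v \<in> nodes t" "hm_delta X q (lab t v) (\<mu> v) = Some (leaf (q', m', d))" "move t v d = Some v'"
  shows "step X t (v, q, \<mu>) = Some (leaf (v', q', \<mu>(v := m')))"
  using assms by (simp add: leaf_def)

lemma step_leaf_result:
  assumes "step X t (u, q, \<mu>) = Some r" "hm_delta X q (lab t u) (\<mu> u) = Some (leaf x)"
  shows "\<exists>y. r = leaf y"
  using assms by (cases x) (auto simp: leaf_def split: if_splits)

lemma Inr_in_set_rtree_map:
  "Inr (q', m', d) \<in> set_rtree (map_rtree (map_sum id (\<lambda>(q, m, d). (F q, G m, d))) r) \<longleftrightarrow>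
    (\<exists>q'' m''. Inr (q'', m'', d) \<in> set_rtree r \<and> q' = F q'' \<and> m' = G m'')"
proof
  assume "Inr (q', m', d) \<in> set_rtree (map_rtree (map_sum id (\<lambda>(q, m, d). (F q, G m, d))) r)"
  then obtain x where "x \<in> set_rtree r" "map_sum id (\<lambda>(q, m, d). (F q, G m, d)) x = Inr (q', m', d)"
    by (auto simp: rtree.set_map)
  then show "\<exists>q'' m''. Inr (q'', m'', d) \<in> set_rtree r \<and> q' = F q'' \<and> m' = G m''"
    by (auto dest!: map_sum_id_eq_InrD)
next
  assume "\<exists>q'' m''. Inr (q'', m'', d) \<in> set_rtree r \<and> q' = F q'' \<and> m' = G m''"
  then show "Inr (q', m', d) \<in> set_rtree (map_rtree (map_sum id (\<lambda>(q, m, d). (F q, G m, d))) r)"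
    by (force simp: rtree.set_map)
qed

fun mapped_conf :: "('q \<Rightarrow> 'p) \<Rightarrow> (nat list \<Rightarrow> 'm \<Rightarrow> 'n) \<Rightarrow> ('q \<Rightarrow> bool) \<Rightarrow> ('m \<Rightarrow> bool) \<Rightarrow> 'a rtree
    \<Rightarrow> ('p, 'n) conf \<Rightarrow> ('q, 'm) conf \<Rightarrow> bool" where
  "mapped_conf F G V M t (u', q', \<mu>') (u, q, \<mu>) \<longleftrightarrow>
     u' = u \<and> V q \<and> q' = F q \<and> (\<forall>w\<in>nodes t. M (\<mu> w) \<and> \<mu>' w = G w (\<mu> w))"

lemma step_simulation_mapped:
  assumes nodes: "nodes t' = nodes t"
    and delta: "\<And>u q m. u \<in> nodes t \<Longrightarrow> V q \<Longrightarrow> M m \<Longrightarrow> hm_delta Y (F q) (lab t' u) (G u m) =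
      map_option (map_rtree (map_sum id (\<lambda>(q', m', d). (F q', G u m', d)))) (hm_delta X q (lab t u) m)"
    and inv: "\<And>u q m r q' m' d. u \<in> nodes t \<Longrightarrow> V q \<Longrightarrow> M m \<Longrightarrow> hm_delta X q (lab t u) m = Some r \<Longrightarrow>
      Inr (q', m', d) \<in> set_rtree r \<Longrightarrow> V q' \<and> M m'"
  shows "step_simulation Y t' X t (mapped_conf F G V M t)"
  unfolding step_simulation_def
proof (intro allI impI)
  fix C' C assume rel: "mapped_conf F G V M t C' C"
  obtain u q \<mu> where C: "C = (u, q, \<mu>)"
    by (cases C) auto
  obtain \<mu>' where C': "C' = (u, F q, \<mu>')" and Vq: "V q"
    and mem: "\<And>w. w \<in> nodes t \<Longrightarrow> M (\<mu> w) \<and> \<mu>' w = G w (\<mu> w)"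
    using rel unfolding C by (cases C') auto
  let ?h = "map_sum id (\<lambda>(q', m', d). (F q', G u m', d))"
  show "rel_option (rel_rtree (rel_sum (=) (mapped_conf F G V M t))) (step Y t' C') (step X t C)"
  proof (cases "u \<in> nodes t")
    case False
    then show ?thesis
      using nodes by (simp add: C C')
  next
    case u: True
    have delta_u: "hm_delta Y (F q) (lab t' u) (\<mu>' u) = map_option (map_rtree ?h) (hm_delta X q (lab t u) (\<mu> u))"
      using delta[OF u Vq] mem[OF u] by simp
    have move: "move t' u d = move t u d" for d
      using move_cong_nodes[OF nodes] .
    show ?thesis
    proof (cases "hm_delta X q (lab t u) (\<mu> u)")
      case None
      then show ?thesis
        using u nodes delta_u by (simp add: C C')
    next
      case (Some r)
      have leaves: "Inr (q', m', d) \<in> set_rtree (map_rtree ?h r) \<longleftrightarrow>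
          (\<exists>q'' m''. Inr (q'', m'', d) \<in> set_rtree r \<and> q' = F q'' \<and> m' = G u m'')" for q' m' d
        by (rule Inr_in_set_rtree_map)
      have moves: "(\<forall>q' m' d. Inr (q', m', d) \<in> set_rtree (map_rtree ?h r) \<longrightarrow> move t' u d \<noteq> None) \<longleftrightarrow>
          (\<forall>q' m' d. Inr (q', m', d) \<in> set_rtree r \<longrightarrow> move t u d \<noteq> None)"
        unfolding leaves move by blast
      show ?thesis
      proof (cases "\<forall>q' m' d. Inr (q', m', d) \<in> set_rtree r \<longrightarrow> move t u d \<noteq> None")
        case False
        moreover from False moves have
          "\<not> (\<forall>q' m' d. Inr (q', m', d) \<in> set_rtree (map_rtree ?h r) \<longrightarrow> move t' u d \<noteq> None)"
          by blast
        moreover have "u \<in> nodes t'"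
          using u nodes by simp
        ultimately show ?thesis
          unfolding C C' using u delta_u Some
          by (simp only: step.simps if_False if_True simp_thms option.simps option.rel_inject)
      next
        case True
        let ?gY = "\<lambda>x. case x of Inl c \<Rightarrow> Inl c | Inr (q'', m'', d) \<Rightarrow> Inr (the (move t' u d), q'', \<mu>'(u := m''))"
        let ?gX = "\<lambda>x. case x of Inl c \<Rightarrow> Inl c | Inr (q'', m'', d) \<Rightarrow> Inr (the (move t u d), q'', \<mu>(u := m''))"
        have stepY: "step Y t' C' = Some (map_rtree ?gY (map_rtree ?h r))"
          using u nodes delta_u Some True moves by (simp add: C')
        have stepX: "step X t C = Some (map_rtree ?gX r)"
          using u Some True by (simp add: C)
        have "rel_rtree (rel_sum (=) (mapped_conf F G V M t)) (map_rtree ?gY (map_rtree ?h r)) (map_rtree ?gX r)"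
          unfolding rtree.rel_map rtree.map_comp
        proof (rule rtree.rel_refl_strong)
          fix x assume x: "x \<in> set_rtree r"
          show "rel_sum (=) (mapped_conf F G V M t) ((?gY \<circ> ?h) x) (?gX x)"
          proof (cases x)
            case (Inr y)
            obtain q'' m'' d where y: "y = (q'', m'', d)"
              by (cases y) auto
            have "V q'' \<and> M m''"
              using inv[OF u Vq _ Some] mem[OF u] x Inr y by blast
            then show ?thesis
              using Inr y mem move by auto
          qed simp
        qed
        then show ?thesis
          unfolding stepY stepX by simp
      qed
    qed
  qed
qed

definition visits :: "('q, 'm) conf list \<Rightarrow> nat list \<Rightarrow> nat" where
  "visits cs u = card {i. i < length cs \<and> fst (cs ! i) = u}"

lemma is_THM_iff_visits:
  "is_THM A \<longleftrightarrow> is_uTHM A \<and> (\<exists>N. \<forall>t cs u. wf_tree (hm_in A) t \<longrightarrow> branch_run A t cs \<longrightarrow> visits cs u \<le> N)"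
  by (simp add: is_THM_def visits_def)

lemma visits_eq_if_positions_eq:
  assumes "list_all2 (\<lambda>C D. fst C = fst D) cs ds"
  shows "visits cs u = visits ds u"
proof -
  have "{i. i < length cs \<and> fst (cs ! i) = u} = {i. i < length ds \<and> fst (ds ! i) = u}"
    using assms by (auto simp: list_all2_conv_all_nth)
  then show ?thesis
    by (simp add: visits_def)
qed

lemma visits_drop: "card {i. k \<le> i \<and> i < length cs \<and> fst (cs ! i) = u} = visits (drop k cs) u"
proof -
  have "{i. k \<le> i \<and> i < length cs \<and> fst (cs ! i) = u} =
      (\<lambda>j. j + k) ` {j. j < length (drop k cs) \<and> fst (drop k cs ! j) = u}"
  proof (intro equalityI subsetI)
    fix i assume "i \<in> {i. k \<le> i \<and> i < length cs \<and> fst (cs ! i) = u}"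
    then show "i \<in> (\<lambda>j. j + k) ` {j. j < length (drop k cs) \<and> fst (drop k cs ! j) = u}"
      by (intro image_eqI[where x = "i - k"]) auto
  qed (auto simp: add.commute)
  then show ?thesis
    by (simp add: visits_def card_image)
qed

lemma visits_le_visits_Cons: "visits cs u \<le> visits (C # cs) u"
proof -
  have "Suc ` {j. j < length cs \<and> fst (cs ! j) = u} \<subseteq> {j. j < length (C # cs) \<and> fst ((C # cs) ! j) = u}"
    by auto
  then have "card (Suc ` {j. j < length cs \<and> fst (cs ! j) = u}) \<le> visits (C # cs) u"
    unfolding visits_def by (rule card_mono[rotated]) simp
  then show ?thesis
    by (simp add: card_image visits_def)
qed

lemma branch_run_simulation:
  assumes "step_simulation Y t' X t R" "R (init_conf Y) (init_conf X)"
    and "\<And>C D. R C D \<Longrightarrow> fst C = fst D" and "branch_run Y t' cs"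
  shows "\<exists>ds. branch_run X t ds \<and> visits cs u = visits ds u"
proof -
  obtain cs' where cs: "cs = init_conf Y # cs'" "step_chain Y t' cs"
    using assms(4) unfolding branch_run_iff_step_chain by (cases cs) auto
  obtain ds' where "step_chain X t (init_conf X # ds')" "list_all2 R cs' ds'"
    using step_chain_simulation[OF assms(1) _ assms(2)] cs by blast
  moreover have "list_all2 (\<lambda>C D. fst C = fst D) cs (init_conf X # ds')"
    using calculation(2) assms(2,3) unfolding cs(1) by (auto elim: list_all2_mono)
  ultimately show ?thesis
    unfolding branch_run_iff_step_chain by (intro exI[of _ "init_conf X # ds'"]) (simp add: visits_eq_if_positions_eq)
qed

lemma mapped_conf_fst: "mapped_conf F G V M t C D \<Longrightarrow> fst C = fst D"
  by (cases C rule: prod_cases3; cases D rule: prod_cases3) simp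

lemma rtranclp_deterministic_normal_form_unique:
  assumes det: "\<And>x y z. R x y \<Longrightarrow> R x z \<Longrightarrow> y = z"
  shows "R\<^sup>*\<^sup>* a b \<Longrightarrow> R\<^sup>*\<^sup>* a c \<Longrightarrow> \<nexists>d. R b d \<Longrightarrow> \<nexists>d. R c d \<Longrightarrow> b = c"
proof (induction arbitrary: c rule: converse_rtranclp_induct)
  case base
  then show ?case
    by (auto elim: converse_rtranclpE)
next
  case (step a a')
  from step.prems(1) show ?case
  proof (cases rule: converse_rtranclpE)
    case base
    then show ?thesis
      using step.hyps(1) step.prems(3) by simp
  next
    case (step a'')
    then have "R\<^sup>*\<^sup>* a' c"
      using det \<open>R a a'\<close> by metis
    then show ?thesis
      by (rule step.IH) (use step.prems in simp_all)
  qed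
qed

lemma card_le_if_strictly_increasing:
  fixes f :: "nat \<Rightarrow> nat"
  assumes mono: "\<And>i j. i \<le> j \<Longrightarrow> j < n \<Longrightarrow> f i \<le> f j"
    and incr: "\<And>i. i \<in> K \<Longrightarrow> Suc i < n \<and> f i < f (Suc i)"
    and bound: "\<And>i. i < n \<Longrightarrow> f i \<le> H"
  shows "card K \<le> H"
proof -
  have "f i < f j" if "i \<in> K" "j \<in> K" "i < j" for i j
    using incr[OF that(1)] mono[of "Suc i" j] incr[OF that(2)] that(3) by fastforce
  then have "inj_on f K"
    by (metis inj_onI less_irrefl linorder_neqE_nat)
  moreover have "f ` K \<subseteq> {..<H}"
    using incr bound by fastforce
  ultimately show ?thesis
    by (metis card_image card_lessThan card_mono finite_lessThan)
qed

definition rename_hm :: "('s, 'n, 'a, 'c) hm \<Rightarrow> ('s \<Rightarrow> nat) \<Rightarrow> ('n \<Rightarrow> nat) \<Rightarrow> (nat, nat, 'a, 'c) hm" where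
  "rename_hm B fs fm =
     \<lparr>hm_states = fs ` hm_states B, hm_mem = fm ` hm_mem B, hm_top = fm (hm_top B),
      hm_in = hm_in B, hm_outa = hm_outa B, hm_init = fs (hm_init B),
      hm_delta = (\<lambda>q \<sigma> m. if q \<in> fs ` hm_states B \<and> m \<in> fm ` hm_mem B
        then map_option (map_rtree (map_sum id (\<lambda>(q', m', d). (fs q', fm m', d))))
               (hm_delta B (inv_into (hm_states B) fs q) \<sigma> (inv_into (hm_mem B) fm m))
        else None)\<rparr>"

context
  fixes B :: "('s, 'n, 'a, 'c) hm" and fs :: "'s \<Rightarrow> nat" and fm :: "'n \<Rightarrow> nat"
  assumes B: "is_uTHM B" and fs: "inj_on fs (hm_states B)" and fm: "inj_on fm (hm_mem B)"
begin

abbreviation rename_rel :: "'a rtree \<Rightarrow> (nat, nat) conf \<Rightarrow> ('s, 'n) conf \<Rightarrow> bool" where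
  "rename_rel t \<equiv> mapped_conf fs (\<lambda>_. fm) (\<lambda>q. q \<in> hm_states B) (\<lambda>m. m \<in> hm_mem B) t"

lemma step_simulation_rename_hm: "step_simulation (rename_hm B fs fm) t B t (rename_rel t)"
proof (rule step_simulation_mapped)
  show "hm_delta (rename_hm B fs fm) (fs q) (lab t u) (fm m) =
      map_option (map_rtree (map_sum id (\<lambda>(q', m', d). (fs q', fm m', d)))) (hm_delta B q (lab t u) m)"
    if "q \<in> hm_states B" "m \<in> hm_mem B" for u q m
  proof -
    have "fs q \<in> fs ` hm_states B" "fm m \<in> fm ` hm_mem B"
      using that by simp_all
    moreover have "inv_into (hm_states B) fs (fs q) = q" "inv_into (hm_mem B) fm (fm m) = m"
      using that fs fm by (simp_all add: inv_into_f_f)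
    ultimately show ?thesis
      unfolding rename_hm_def by (simp only: hm.simps if_True simp_thms)
  qed
  show "q' \<in> hm_states B \<and> m' \<in> hm_mem B"
    if "hm_delta B q (lab t u) m = Some r" "Inr (q', m', d) \<in> set_rtree r" for u q m r q' m' d
  proof -
    have "wf_tree_Y (hm_outa B) (hm_states B \<times> hm_mem B \<times> UNIV) r"
      using B that(1) unfolding is_uTHM_def by blast
    then show ?thesis
      using wf_tree_Y_setD[OF _ that(2)] by blast
  qed
qed simp

lemma rename_rel_init: "rename_rel t (init_conf (rename_hm B fs fm)) (init_conf B)"
  using B by (simp add: init_conf_def rename_hm_def is_uTHM_def)

lemma hm_output_rename_hm: "hm_output (rename_hm B fs fm) t = hm_output B t"
  unfolding hm_output_def evalC_simulation_iff[OF step_simulation_rename_hm rename_rel_init] ..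

lemma is_uTHM_rename_hm: "is_uTHM (rename_hm B fs fm)"
  unfolding is_uTHM_def
proof (intro conjI allI impI)
  let ?h = "map_sum id (\<lambda>(q', m', d). (fs q', fm m', d))"
  fix q \<sigma> m r assume delta: "hm_delta (rename_hm B fs fm) q \<sigma> m = Some r"
  then obtain q0 m0 r0 where q0: "q = fs q0" "q0 \<in> hm_states B" and m0: "m = fm m0" "m0 \<in> hm_mem B"
    and r0: "hm_delta B q0 \<sigma> m0 = Some r0" "r = map_rtree ?h r0"
    using fs fm by (auto simp: rename_hm_def split: if_splits)
  then have P: "\<sigma> \<in> fst (hm_in B)" "wf_tree_Y (hm_outa B) (hm_states B \<times> hm_mem B \<times> UNIV) r0"
    "\<forall>q' m' i. Inr (q', m', Dn i) \<in> set_rtree r0 \<longrightarrow> 1 \<le> i \<and> i \<le> snd (hm_in B) \<sigma>"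
    using B unfolding is_uTHM_def by blast+
  show "q \<in> hm_states (rename_hm B fs fm)" "m \<in> hm_mem (rename_hm B fs fm)" "\<sigma> \<in> fst (hm_in (rename_hm B fs fm))"
    using q0 m0 P(1) by (simp_all add: rename_hm_def)
  show "wf_tree_Y (hm_outa (rename_hm B fs fm))
      (hm_states (rename_hm B fs fm) \<times> hm_mem (rename_hm B fs fm) \<times> UNIV) r"
    unfolding r0(2) using P(2) by (auto simp: rename_hm_def intro!: wf_tree_Y_map)
  fix q' m' i assume "Inr (q', m', Dn i) \<in> set_rtree r"
  then obtain x where "x \<in> set_rtree r0" "?h x = Inr (q', m', Dn i)"
    unfolding r0(2) by (auto simp: rtree.set_map)
  then show "1 \<le> i" "i \<le> snd (hm_in (rename_hm B fs fm)) \<sigma>"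
    using P(3) by (auto simp: rename_hm_def dest!: map_sum_id_eq_InrD)
qed (use B in \<open>auto simp: rename_hm_def is_uTHM_def\<close>)

lemma is_THM_rename_hm:
  assumes "is_THM B"
  shows "is_THM (rename_hm B fs fm)"
proof -
  obtain N where N: "\<And>t cs u. wf_tree (hm_in B) t \<Longrightarrow> branch_run B t cs \<Longrightarrow> visits cs u \<le> N"
    using assms unfolding is_THM_iff_visits by blast
  have bound: "visits cs u \<le> N"
    if wf: "wf_tree (hm_in (rename_hm B fs fm)) t" and run: "branch_run (rename_hm B fs fm) t cs" for t cs u
  proof -
    have "\<exists>ds. branch_run B t ds \<and> visits cs u = visits ds u"
      by (rule branch_run_simulation[OF step_simulation_rename_hm rename_rel_init _ run]) (rule mapped_conf_fst)
    then obtain ds where "branch_run B t ds" "visits cs u = visits ds u"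
      by blast
    then show ?thesis
      using N wf by (simp add: rename_hm_def)
  qed
  show ?thesis
    unfolding is_THM_iff_visits by (intro conjI is_uTHM_rename_hm exI[of _ N] allI impI bound)
qed

end

lemma ex_nat_hm:
  assumes "is_uTHM (B :: ('s, 'n, 'a, 'c) hm)"
  obtains B' :: "(nat, nat, 'a, 'c) hm" where "is_uTHM B'" "hm_in B' = hm_in B" "hm_outa B' = hm_outa B"
    "\<And>t. hm_output B' t = hm_output B t" "is_THM B \<Longrightarrow> is_THM B'"
proof -
  obtain fs :: "'s \<Rightarrow> nat" where fs: "inj_on fs (hm_states B)"
    using finite_imp_inj_to_nat_seg[of "hm_states B"] assms unfolding is_uTHM_def by blast
  obtain fm :: "'n \<Rightarrow> nat" where fm: "inj_on fm (hm_mem B)"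
    using finite_imp_inj_to_nat_seg[of "hm_mem B"] assms unfolding is_uTHM_def by blast
  show ?thesis
  proof (rule that[of "rename_hm B fs fm"])
    show "hm_in (rename_hm B fs fm) = hm_in B" "hm_outa (rename_hm B fs fm) = hm_outa B"
      by (simp_all add: rename_hm_def)
  qed (simp_all add: is_uTHM_rename_hm[OF assms fs fm] hm_output_rename_hm[OF assms fs fm]
      is_THM_rename_hm[OF assms fs fm])
qed

section \<open>Contexts of automaton runs\<close>

definition subtree_state :: "'d bta \<Rightarrow> 'd rtree \<Rightarrow> nat list \<Rightarrow> nat" where
  "subtree_state \<delta> t u = bta_run \<delta> (\<lambda>_. ({}, {})) (subt t u)"

definition child_states :: "'d bta \<Rightarrow> 'd rtree \<Rightarrow> nat list \<Rightarrow> nat list" where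
  "child_states \<delta> t u = map (\<lambda>j. subtree_state \<delta> t (u @ [Suc j])) [0..<nchildren t u]"

lemma child_states_subt:
  "subt t u = Node a ts \<Longrightarrow> child_states \<delta> t u = map (\<lambda>i. bta_run \<delta> (\<lambda>_. ({}, {})) (ts ! i)) [0..<length ts]"
  by (simp add: child_states_def subtree_state_def nchildren_def subt_child)

lemma subtree_state_unfold: "subtree_state \<delta> t u = \<delta> (lab t u) ({}, {}) (child_states \<delta> t u)"
  by (cases "subt t u") (simp add: subtree_state_def child_states_subt lab_def)

text \<open>\<^term>\<open>ctx_state \<delta> t u q\<close> is the state at the root of an unmarked run of \<open>\<delta>\<close> on \<open>t\<close> in which
  the subtree at \<open>u\<close> is replaced by one evaluating to \<open>q\<close>.\<close>

fun ctx_state :: "'d bta \<Rightarrow> 'd rtree \<Rightarrow> nat list \<Rightarrow> nat \<Rightarrow> nat" where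
  "ctx_state \<delta> (Node a ts) [] q = q"
| "ctx_state \<delta> (Node a ts) (i # w) q = (if i = 0 then q else
     \<delta> a ({}, {}) ((map (\<lambda>j. bta_run \<delta> (\<lambda>_. ({}, {})) (ts ! j)) [0..<length ts])[i - 1 := ctx_state \<delta> (ts ! (i - 1)) w q]))"

lemma ctx_state_Nil [simp]: "ctx_state \<delta> t [] q = q"
  by (cases t) simp

lemma bta_run_ctx_state:
  assumes "u \<in> nodes t" "\<And>p. \<not> prefix u p \<Longrightarrow> mk p = ({}, {})"
  shows "bta_run \<delta> mk t = ctx_state \<delta> t u (bta_run \<delta> (\<lambda>p. mk (u @ p)) (subt t u))"
  using assms
proof (induction u arbitrary: t mk)
  case (Cons i w)
  obtain a ts k where t: "t = Node a ts" "i = Suc k" "k < length ts" "w \<in> nodes (ts ! k)"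
    using Cons.prems(1) by (cases t) (auto simp: Cons_in_nodes_Node)
  have IH: "bta_run \<delta> (\<lambda>p. mk (Suc k # p)) (ts ! k) =
      ctx_state \<delta> (ts ! k) w (bta_run \<delta> (\<lambda>p. mk (Suc k # w @ p)) (subt (ts ! k) w))"
    using t by (intro Cons.IH) (auto intro: Cons.prems(2))
  have other: "(\<lambda>p. mk (Suc j # p)) = (\<lambda>_. ({}, {}))" if "j \<noteq> k" for j
    using that t(2) by (auto intro!: Cons.prems(2))
  have children: "map (\<lambda>j. bta_run \<delta> (\<lambda>p. mk (Suc j # p)) (ts ! j)) [0..<length ts] =
      (map (\<lambda>j. bta_run \<delta> (\<lambda>_. ({}, {})) (ts ! j)) [0..<length ts])
        [k := ctx_state \<delta> (ts ! k) w (bta_run \<delta> (\<lambda>p. mk (Suc k # w @ p)) (subt (ts ! k) w))]"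
    using t(3) by (intro nth_equalityI) (auto simp: IH other nth_list_update)
  have "mk [] = ({}, {})"
    using Cons.prems(2) by simp
  then show ?case
    unfolding t(1,2) by (simp only: bta_run.simps children) simp
qed simp

lemma ctx_state_append_child:
  assumes "u @ [Suc i] \<in> nodes t"
  shows "ctx_state \<delta> t (u @ [Suc i]) q = ctx_state \<delta> t u (\<delta> (lab t u) ({}, {}) ((child_states \<delta> t u)[i := q]))"
  using assms
proof (induction u arbitrary: t)
  case Nil
  obtain a ts where t: "t = Node a ts"
    by (cases t)
  then show ?case
    by (simp add: child_states_subt)
next
  case (Cons k w)
  obtain a ts k' where t: "t = Node a ts" "k = Suc k'" "k' < length ts" "w @ [Suc i] \<in> nodes (ts ! k')"
    using Cons.prems by (cases t) (auto simp: Cons_in_nodes_Node)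
  have "child_states \<delta> (Node a ts) (Suc k' # w) = child_states \<delta> (ts ! k') w"
    by (simp add: child_states_def subtree_state_def nchildren_def)
  then show ?case
    using Cons.IH[OF t(4)] by (simp add: t)
qed

lemma ctx_state_less: "(\<And>a m cs. \<delta> a m cs < N) \<Longrightarrow> q < N \<Longrightarrow> ctx_state \<delta> t u q < N"
  by (cases "(\<delta>, t, u, q)" rule: ctx_state.cases) auto

lemma bta_run_node_mark:
  assumes "u \<in> nodes t"
  shows "bta_run \<delta> (node_mark u) t = ctx_state \<delta> t u (\<delta> (lab t u) (UNIV, {}) (child_states \<delta> t u))"
proof -
  have "bta_run \<delta> (node_mark u) t = ctx_state \<delta> t u (bta_run \<delta> (\<lambda>p. node_mark u (u @ p)) (subt t u))"
    using assms by (rule bta_run_ctx_state) (auto simp: node_mark_def)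
  also have "bta_run \<delta> (\<lambda>p. node_mark u (u @ p)) (subt t u) = \<delta> (lab t u) (UNIV, {}) (child_states \<delta> t u)"
  proof (cases "subt t u")
    case (Node a ts)
    have "(\<lambda>p. node_mark u (u @ Suc i # p)) = (\<lambda>_. ({}, {}))" for i
      by (simp add: node_mark_def)
    then show ?thesis
      using Node by (simp add: child_states_subt node_mark_def lab_def)
  qed
  finally show ?thesis .
qed

definition ctx_table :: "'d bta \<Rightarrow> nat \<Rightarrow> 'd rtree \<Rightarrow> nat list \<Rightarrow> nat list" where
  "ctx_table \<delta> N t u = map (ctx_state \<delta> t u) [0..<N]"

definition child_ctx_table :: "'d bta \<Rightarrow> nat \<Rightarrow> nat list \<Rightarrow> 'd \<Rightarrow> nat list \<Rightarrow> nat \<Rightarrow> nat list" where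
  "child_ctx_table \<delta> N tab d ss i = map (\<lambda>q. tab ! \<delta> d ({}, {}) (ss[i := q])) [0..<N]"

lemma child_ctx_table_ctx_table:
  assumes "\<And>a m cs. \<delta> a m cs < N" "u @ [Suc i] \<in> nodes t"
  shows "child_ctx_table \<delta> N (ctx_table \<delta> N t u) (lab t u) (child_states \<delta> t u) i = ctx_table \<delta> N t (u @ [Suc i])"
  unfolding child_ctx_table_def ctx_table_def
  by (rule nth_equalityI) (simp_all add: ctx_state_append_child[OF assms(2)] assms(1))

lemma ctx_table_Nil: "ctx_table \<delta> N t [] = [0..<N]"
  unfolding ctx_table_def by (rule nth_equalityI) simp_all

lemma nth_ctx_table: "q < N \<Longrightarrow> ctx_table \<delta> N t u ! q = ctx_state \<delta> t u q"
  unfolding ctx_table_def by simp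

section \<open>The machine computing \<open>f \<circ> g\<close>\<close>

text \<open>The first traversal (states \<open>Down1\<close>, \<open>Up1\<close>) stores at every node the states of the
  unmarked run of the relabeling automaton at its children; the Boolean flags record whether the
  node is the root. The second traversal (states \<open>Down2\<close>, \<open>Up2\<close>) carries the context table of
  the current node down and stores the label of the node under \<open>g\<close>, with the initial memory
  symbol of \<open>A\<close>, as \<open>Labelled\<close>. Back at the root the machine simulates \<open>A\<close> in states \<open>Sim\<close>.\<close>

datatype 'q cstate = Down1 bool | Up1 nat | Down2 "nat list" | Up2 | Sim 'q
datatype ('a, 'm) cmem = Blank | Collected bool "nat list" | Passed bool "nat list" "nat list" nat
  | Labelled 'a 'm

fun prepass_state :: "'q cstate \<Rightarrow> bool" where
  "prepass_state (Sim q) \<longleftrightarrow> False"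
| "prepass_state _ \<longleftrightarrow> True"

locale relabel_precomp =
  fixes A :: "('q, 'm, 'a, 'c) hm" and \<Delta> :: "'d ralph" and g :: "'d rtree \<Rightarrow> 'a rtree"
    and \<delta> :: "'d bta" and N :: nat and out :: "nat \<Rightarrow> 'a"
  assumes uTHM_A: "is_uTHM A" and finite_\<Delta>: "finite (fst \<Delta>)" and \<delta>_less: "\<And>a m cs. \<delta> a m cs < N"
    and wf_tree_g: "\<And>t. wf_tree \<Delta> t \<Longrightarrow> wf_tree (hm_in A) (g t)"
    and nodes_g: "\<And>t. wf_tree \<Delta> t \<Longrightarrow> nodes (g t) = nodes t"
    and lab_g: "\<And>t u. wf_tree \<Delta> t \<Longrightarrow> u \<in> nodes t \<Longrightarrow> lab (g t) u = out (bta_run \<delta> (node_mark u) t)"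
begin

abbreviation rank :: "'d \<Rightarrow> nat" where
  "rank d \<equiv> snd \<Delta> d"

definition max_rank :: nat where
  "max_rank = Max (insert 0 (rank ` fst \<Delta>))"

definition tables :: "nat list set" where
  "tables = {tab. length tab = N \<and> set tab \<subseteq> {..<N}}"

definition state_lists :: "nat list set" where
  "state_lists = {ss. length ss \<le> max_rank \<and> set ss \<subseteq> {..<N}}"

definition cstates :: "'q cstate set" where
  "cstates = {Down1 True, Down1 False, Up2} \<union> Up1 ` {..<N} \<union> Down2 ` tables \<union> Sim ` hm_states A"

definition cmems :: "('a, 'm) cmem set" where
  "cmems = {Blank} \<union> (\<lambda>(r, ss). Collected r ss) ` (UNIV \<times> state_lists)
     \<union> (\<lambda>(r, tab, ss, i). Passed r tab ss i) ` (UNIV \<times> tables \<times> state_lists \<times> {..max_rank})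
     \<union> (\<lambda>(\<sigma>, m). Labelled \<sigma> m) ` (fst (hm_in A) \<times> hm_mem A)"

lemma rank_le_max_rank: "d \<in> fst \<Delta> \<Longrightarrow> rank d \<le> max_rank"
  unfolding max_rank_def using finite_\<Delta> by (intro Max_ge) auto

lemma finite_cstates: "finite cstates"
proof -
  have "finite tables"
    unfolding tables_def by (rule finite_subset[OF _ finite_lists_length_eq[of "{..<N}" N]]) auto
  then show ?thesis
    using uTHM_A unfolding cstates_def is_uTHM_def by auto
qed

lemma finite_cmems: "finite cmems"
proof -
  have "finite tables"
    unfolding tables_def by (rule finite_subset[OF _ finite_lists_length_eq[of "{..<N}" N]]) auto
  moreover have "finite state_lists"
    unfolding state_lists_def by (rule finite_subset[OF _ finite_lists_length_le[of "{..<N}" max_rank]]) auto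
  ultimately show ?thesis
    using uTHM_A unfolding cmems_def is_uTHM_def by auto
qed

lemma cstates_simps [simp]:
  "Down1 r \<in> cstates" "Up1 s \<in> cstates \<longleftrightarrow> s < N" "Down2 tab \<in> cstates \<longleftrightarrow> tab \<in> tables" "Up2 \<in> cstates"
  "Sim q \<in> cstates \<longleftrightarrow> q \<in> hm_states A"
  by (cases r) (auto simp: cstates_def)

lemma cmems_simps [simp]:
  "Blank \<in> cmems" "Collected r ss \<in> cmems \<longleftrightarrow> ss \<in> state_lists"
  "Passed r tab ss i \<in> cmems \<longleftrightarrow> tab \<in> tables \<and> ss \<in> state_lists \<and> i \<le> max_rank"
  "Labelled \<sigma> m \<in> cmems \<longleftrightarrow> \<sigma> \<in> fst (hm_in A) \<and> m \<in> hm_mem A"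
  by (auto simp: cmems_def image_iff)

definition sim_delta :: "'q \<Rightarrow> 'd \<Rightarrow> 'a \<Rightarrow> 'm \<Rightarrow> ('c + ('q cstate \<times> ('a, 'm) cmem \<times> dir)) rtree option" where
  "sim_delta q d \<sigma> m = (if rank d = snd (hm_in A) \<sigma> then
     map_option (map_rtree (map_sum id (\<lambda>(q', m', d'). (Sim q', Labelled \<sigma> m', d')))) (hm_delta A q \<sigma> m)
     else None)"

definition distribute_delta :: "bool \<Rightarrow> nat list \<Rightarrow> nat list \<Rightarrow> 'd \<Rightarrow> nat \<Rightarrow>
    ('c + ('q cstate \<times> ('a, 'm) cmem \<times> dir)) rtree option" where
  "distribute_delta r tab ss d i =
     (if i < rank d then Some (leaf (Down2 (child_ctx_table \<delta> N tab d ss i), Passed r tab ss (Suc i), Dn (Suc i)))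
      else let \<sigma> = out (tab ! \<delta> d (UNIV, {}) ss) in
        if \<sigma> \<notin> fst (hm_in A) then None
        else if r then sim_delta (hm_init A) d \<sigma> (hm_top A)
        else Some (leaf (Up2, Labelled \<sigma> (hm_top A), Up)))"

definition collect_delta :: "bool \<Rightarrow> 'd \<Rightarrow> nat list \<Rightarrow> ('c + ('q cstate \<times> ('a, 'm) cmem \<times> dir)) rtree option" where
  "collect_delta r d ss =
     (if length ss < rank d then Some (leaf (Down1 False, Collected r ss, Dn (Suc (length ss))))
      else if rank d < length ss then None
      else if r then distribute_delta True [0..<N] ss d 0
      else Some (leaf (Up1 (\<delta> d ({}, {}) ss), Collected r ss, Up)))"

fun comp_delta0 :: "'q cstate \<Rightarrow> 'd \<Rightarrow> ('a, 'm) cmem \<Rightarrow> ('c + ('q cstate \<times> ('a, 'm) cmem \<times> dir)) rtree option" where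
  "comp_delta0 (Down1 r) d Blank = collect_delta r d []"
| "comp_delta0 (Up1 s) d (Collected r ss) = collect_delta r d (ss @ [s])"
| "comp_delta0 (Down2 tab) d (Collected r ss) = distribute_delta r tab ss d 0"
| "comp_delta0 Up2 d (Passed r tab ss i) = distribute_delta r tab ss d i"
| "comp_delta0 (Sim q) d (Labelled \<sigma> m) = sim_delta q d \<sigma> m"
| "comp_delta0 _ _ _ = None"

definition comp_delta :: "'q cstate \<Rightarrow> 'd \<Rightarrow> ('a, 'm) cmem \<Rightarrow> ('c + ('q cstate \<times> ('a, 'm) cmem \<times> dir)) rtree option" where
  "comp_delta q d m = (if d \<in> fst \<Delta> \<and> q \<in> cstates \<and> m \<in> cmems then comp_delta0 q d m else None)"

definition comp_hm :: "('q cstate, ('a, 'm) cmem, 'd, 'c) hm" where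
  "comp_hm = \<lparr>hm_states = cstates, hm_mem = cmems, hm_top = Blank, hm_in = \<Delta>, hm_outa = hm_outa A,
     hm_init = Down1 True, hm_delta = comp_delta\<rparr>"

lemma comp_hm_simps [simp]:
  "hm_states comp_hm = cstates" "hm_mem comp_hm = cmems" "hm_top comp_hm = Blank" "hm_in comp_hm = \<Delta>"
  "hm_outa comp_hm = hm_outa A" "hm_init comp_hm = Down1 True" "hm_delta comp_hm = comp_delta"
  by (simp_all add: comp_hm_def)

definition delta_ok :: "'d \<Rightarrow> ('c + ('q cstate \<times> ('a, 'm) cmem \<times> dir)) rtree \<Rightarrow> bool" where
  "delta_ok d r \<longleftrightarrow> wf_tree_Y (hm_outa A) (cstates \<times> cmems \<times> UNIV) r \<and>
     (\<forall>q' m' i. Inr (q', m', Dn i) \<in> set_rtree r \<longrightarrow> 1 \<le> i \<and> i \<le> rank d)"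

lemma sim_delta_ok: "sim_delta q d \<sigma> m = Some r \<Longrightarrow> delta_ok d r"
proof -
  assume "sim_delta q d \<sigma> m = Some r"
  then obtain r0 where r0: "hm_delta A q \<sigma> m = Some r0"
    "r = map_rtree (map_sum id (\<lambda>(q', m', d'). (Sim q', Labelled \<sigma> m', d'))) r0"
    and rank: "rank d = snd (hm_in A) \<sigma>"
    by (auto simp: sim_delta_def split: if_splits)
  have P: "\<sigma> \<in> fst (hm_in A)" "wf_tree_Y (hm_outa A) (hm_states A \<times> hm_mem A \<times> UNIV) r0"
    "\<forall>q' m' i. Inr (q', m', Dn i) \<in> set_rtree r0 \<longrightarrow> 1 \<le> i \<and> i \<le> snd (hm_in A) \<sigma>"
    using uTHM_A r0(1) unfolding is_uTHM_def by blast+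
  show "delta_ok d r"
    unfolding delta_ok_def
  proof (intro conjI allI impI)
    show "wf_tree_Y (hm_outa A) (cstates \<times> cmems \<times> UNIV) r"
      unfolding r0(2) using P by (auto intro!: wf_tree_Y_map)
    fix q' m' i assume "Inr (q', m', Dn i) \<in> set_rtree r"
    then obtain x where "x \<in> set_rtree r0" "map_sum id (\<lambda>(q', m', d'). (Sim q', Labelled \<sigma> m', d')) x = Inr (q', m', Dn i)"
      unfolding r0(2) by (auto simp: rtree.set_map)
    then show "1 \<le> i" "i \<le> rank d"
      using P(3) rank by (auto dest!: map_sum_id_eq_InrD)
  qed
qed

lemma child_ctx_table_in_tables:
  assumes "tab \<in> tables"
  shows "child_ctx_table \<delta> N tab d ss i \<in> tables"
proof -
  have "tab ! k < N" if "k < N" for k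
  proof -
    have "tab ! k \<in> set tab"
      using assms that by (simp add: tables_def)
    then show ?thesis
      using assms by (auto simp: tables_def)
  qed
  then show ?thesis
    unfolding tables_def child_ctx_table_def using \<delta>_less by auto
qed

lemma distribute_delta_ok:
  assumes "tab \<in> tables" "ss \<in> state_lists" "d \<in> fst \<Delta>" "distribute_delta r tab ss d i = Some r'"
  shows "delta_ok d r'"
proof (cases "i < rank d")
  case True
  then show ?thesis
    using assms rank_le_max_rank[OF assms(3)] child_ctx_table_in_tables[OF assms(1)]
    by (auto simp: distribute_delta_def delta_ok_def)
next
  case False
  then show ?thesis
    using assms(4) uTHM_A sim_delta_ok unfolding is_uTHM_def
    by (auto simp: distribute_delta_def delta_ok_def Let_def split: if_splits)
qed

lemma collect_delta_ok:
  assumes "set ss \<subseteq> {..<N}" "d \<in> fst \<Delta>" "collect_delta r d ss = Some r'"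
  shows "delta_ok d r'"
proof -
  have "[0..<N] \<in> tables"
    by (auto simp: tables_def)
  moreover have "length ss \<le> rank d \<Longrightarrow> ss \<in> state_lists"
    using assms(1) rank_le_max_rank[OF assms(2)] by (simp add: state_lists_def)
  ultimately show ?thesis
    using assms distribute_delta_ok[of "[0..<N]" ss d True 0 r'] rank_le_max_rank[OF assms(2)] \<delta>_less
    by (auto simp: collect_delta_def delta_ok_def state_lists_def split: if_splits)
qed

lemma comp_delta_ok:
  assumes "comp_delta q d m = Some r"
  shows "delta_ok d r"
proof -
  have d: "d \<in> fst \<Delta>" and q: "q \<in> cstates" and m: "m \<in> cmems" and delta0: "comp_delta0 q d m = Some r"
    using assms by (auto simp: comp_delta_def split: if_splits)
  show ?thesis
  proof (cases q)
    case (Down1 b)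
    then show ?thesis
      using delta0 d collect_delta_ok[of "[]" d b r] by (cases m) auto
  next
    case (Up1 s)
    then show ?thesis
    proof (cases m)
      case (Collected b ss)
      then show ?thesis
        using delta0 d q m Up1 collect_delta_ok[of "ss @ [s]" d b r] by (auto simp: state_lists_def)
    qed (use delta0 in auto)
  next
    case (Down2 tab)
    then show ?thesis
      using delta0 d q m distribute_delta_ok[of tab _ d _ 0 r] by (cases m) auto
  next
    case Up2
    then show ?thesis
      using delta0 d m distribute_delta_ok[of _ _ d _ _ r] by (cases m) auto
  next
    case (Sim q')
    then show ?thesis
      using delta0 sim_delta_ok[of q' d _ _ r] by (cases m) auto
  qed
qed

lemma is_uTHM_comp_hm: "is_uTHM comp_hm"
  unfolding is_uTHM_def
proof (intro conjI allI impI)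
  show "finite (fst (hm_outa comp_hm))"
    using uTHM_A by (simp add: is_uTHM_def)
  fix q \<sigma> m r assume "hm_delta comp_hm q \<sigma> m = Some r"
  then have "comp_delta q \<sigma> m = Some r"
    by simp
  then have "\<sigma> \<in> fst \<Delta>" "q \<in> cstates" "m \<in> cmems" and ok: "delta_ok \<sigma> r"
    by (auto simp: comp_delta_def comp_delta_ok split: if_splits)
  then show "q \<in> hm_states comp_hm" "\<sigma> \<in> fst (hm_in comp_hm)" "m \<in> hm_mem comp_hm"
    "wf_tree_Y (hm_outa comp_hm) (hm_states comp_hm \<times> hm_mem comp_hm \<times> UNIV) r"
    by (auto simp: delta_ok_def)
  fix q' m' i assume "Inr (q', m', Dn i) \<in> set_rtree r"
  then show "1 \<le> i" "i \<le> snd (hm_in comp_hm) \<sigma>"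
    using ok by (auto simp: delta_ok_def)
qed (simp_all add: finite_cstates finite_cmems finite_\<Delta>)


lemma subtree_state_less: "subtree_state \<delta> t u < N"
  unfolding subtree_state_def using bta_run_in[of \<delta> "{..<N}"] \<delta>_less by auto

lemma nth_child_states: "k < nchildren t v \<Longrightarrow> child_states \<delta> t v ! k = subtree_state \<delta> t (v @ [Suc k])"
  by (simp add: child_states_def)

lemma child_states_props:
  assumes "wf_tree \<Delta> t" "v \<in> nodes t"
  shows "length (child_states \<delta> t v) = rank (lab t v)" "child_states \<delta> t v \<in> state_lists"
proof -
  show length: "length (child_states \<delta> t v) = rank (lab t v)"
    using wf_tree_nchildren[OF assms] by (simp add: child_states_def)
  show "child_states \<delta> t v \<in> state_lists"
    using length rank_le_max_rank[OF wf_tree_lab[OF assms]] subtree_state_less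
    by (auto simp: state_lists_def child_states_def)
qed

lemma ctx_table_in_tables: "ctx_table \<delta> N t u \<in> tables"
  unfolding tables_def ctx_table_def using ctx_state_less[of \<delta> N] \<delta>_less by auto

lemma lab_g_in_alphabet: "wf_tree \<Delta> t \<Longrightarrow> u \<in> nodes t \<Longrightarrow> lab (g t) u \<in> fst (hm_in A)"
  using wf_tree_lab[OF wf_tree_g] nodes_g by simp

lemma lab_g_from_ctx_table:
  assumes "wf_tree \<Delta> t" "u \<in> nodes t"
  shows "out (ctx_table \<delta> N t u ! \<delta> (lab t u) (UNIV, {}) (child_states \<delta> t u)) = lab (g t) u"
  using lab_g[OF assms] bta_run_node_mark[OF assms(2), of \<delta>] by (simp add: nth_ctx_table \<delta>_less)

definition prepass_step :: "'d rtree \<Rightarrow> ('q cstate, ('a, 'm) cmem) conf \<Rightarrow> ('q cstate, ('a, 'm) cmem) conf \<Rightarrow> bool" where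
  "prepass_step t C C' \<longleftrightarrow>
     step comp_hm t C = Some (leaf C') \<and> prepass_state (fst (snd C)) \<and> prepass_state (fst (snd C'))"

lemma prepass_steps_single_steps: "(prepass_step t)\<^sup>*\<^sup>* C C' \<Longrightarrow> (single_step comp_hm t)\<^sup>*\<^sup>* C C'"
  by (induction rule: rtranclp_induct)
    (auto simp: prepass_step_def single_step_def intro: rtranclp.rtrancl_into_rtrancl)

lemma prepass_step_det: "prepass_step t C C' \<Longrightarrow> prepass_step t C C'' \<Longrightarrow> C' = C''"
  by (simp add: prepass_step_def leaf_def)

lemma prepass_stepI:
  assumes "v \<in> nodes t" "comp_delta q (lab t v) (\<mu> v) = Some (leaf (q', m', d))" "move t v d = Some v'"
    and "prepass_state q" "prepass_state q'"
  shows "prepass_step t (v, q, \<mu>) (v', q', \<mu>(v := m'))"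
  using step_leaf[of v t comp_hm q \<mu> q' m' d v'] assms by (simp add: prepass_step_def)

text \<open>The common shape of both traversals at a node: its memory records which child is visited
  next, and the visit of a child fills the memory of the child's subtree with \<open>val\<close>.\<close>

lemma prepass_children:
  assumes v: "v \<in> nodes t"
    and start: "comp_delta q (lab t v) (\<mu> v) = F 0" "prepass_state q"
    and down: "\<And>k. k < nchildren t v \<Longrightarrow> F k = Some (leaf (qc k, M k, Dn (Suc k)))"
    and up: "\<And>k. k < nchildren t v \<Longrightarrow> comp_delta (qr k) (lab t v) (M k) = F (Suc k)"
    and pre: "\<And>k. k < nchildren t v \<Longrightarrow> prepass_state (qc k) \<and> prepass_state (qr k)"
    and visit: "\<And>k \<mu>'. k < nchildren t v \<Longrightarrow> (\<forall>w. prefix (v @ [Suc k]) w \<longrightarrow> \<mu>' w = \<mu> w) \<Longrightarrow>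
      \<exists>\<mu>''. (prepass_step t)\<^sup>*\<^sup>* (v @ [Suc k], qc k, \<mu>') (v, qr k, \<mu>'') \<and>
        (\<forall>w. \<mu>'' w = (if prefix (v @ [Suc k]) w \<and> w \<in> nodes t then val w else \<mu>' w))"
  shows "\<exists>q' \<mu>'. (prepass_step t)\<^sup>*\<^sup>* (v, q, \<mu>) (v, q', \<mu>') \<and> prepass_state q' \<and>
    comp_delta q' (lab t v) (\<mu>' v) = F (nchildren t v) \<and>
    (\<forall>w. w \<noteq> v \<longrightarrow> \<mu>' w = (if strict_prefix v w \<and> w \<in> nodes t then val w else \<mu> w))"
proof -
  have "\<exists>q' \<mu>'. (prepass_step t)\<^sup>*\<^sup>* (v, q, \<mu>) (v, q', \<mu>') \<and> prepass_state q' \<and>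
      comp_delta q' (lab t v) (\<mu>' v) = F k \<and>
      (\<forall>w. w \<noteq> v \<longrightarrow> \<mu>' w = (if (\<exists>j<k. prefix (v @ [Suc j]) w) \<and> w \<in> nodes t then val w else \<mu> w))"
    if "k \<le> nchildren t v" for k
    using that
  proof (induction k)
    case 0
    then show ?case
      using start by (intro exI[of _ q] exI[of _ \<mu>]) simp
  next
    case (Suc k)
    then obtain q' \<mu>' where IH: "(prepass_step t)\<^sup>*\<^sup>* (v, q, \<mu>) (v, q', \<mu>')" "prepass_state q'"
      "comp_delta q' (lab t v) (\<mu>' v) = F k"
      "\<forall>w. w \<noteq> v \<longrightarrow> \<mu>' w = (if (\<exists>j<k. prefix (v @ [Suc j]) w) \<and> w \<in> nodes t then val w else \<mu> w)"
      by auto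
    define c where "c = v @ [Suc k]"
    have k: "k < nchildren t v"
      using Suc.prems by simp
    have c: "c \<in> nodes t"
      using child_in_nodes_iff[OF v] k by (simp add: c_def)
    have move: "move t v (Dn (Suc k)) = Some c"
      using c by (simp add: c_def)
    have step_down: "prepass_step t (v, q', \<mu>') (c, qc k, \<mu>'(v := M k))"
      by (rule prepass_stepI[OF v _ move]) (use IH(2,3) down[OF k] pre[OF k] in simp_all)
    have "\<forall>w. prefix c w \<longrightarrow> (\<mu>'(v := M k)) w = \<mu> w"
      using IH(4) by (auto simp: c_def prefix_def)
    then obtain \<mu>'' where visited: "(prepass_step t)\<^sup>*\<^sup>* (c, qc k, \<mu>'(v := M k)) (v, qr k, \<mu>'')"
      and \<mu>'': "\<forall>w. \<mu>'' w = (if prefix c w \<and> w \<in> nodes t then val w else (\<mu>'(v := M k)) w)"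
      using visit[OF k] unfolding c_def by blast
    have "\<mu>'' v = M k"
      using \<mu>'' by (simp add: c_def prefix_def)
    moreover have "\<mu>'' w = (if (\<exists>j<Suc k. prefix (v @ [Suc j]) w) \<and> w \<in> nodes t then val w else \<mu> w)"
      if "w \<noteq> v" for w
      using that \<mu>'' IH(4) by (auto simp: c_def less_Suc_eq)
    moreover have "(prepass_step t)\<^sup>*\<^sup>* (v, q, \<mu>) (v, qr k, \<mu>'')"
      using IH(1) step_down visited by (meson converse_rtranclp_into_rtranclp rtranclp_trans)
    ultimately show ?case
      using up[OF k] pre[OF k] by (intro exI[of _ "qr k"] exI[of _ \<mu>'']) simp
  qed
  from this[of "nchildren t v"] show ?thesis
    using strict_prefix_in_nodes_iff[OF v] by (metis order_refl)
qed


lemma prepass_return: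
  assumes c: "v @ [Suc k] \<in> nodes t"
    and visit: "(prepass_step t)\<^sup>*\<^sup>* (v @ [Suc k], q, \<mu>) (v @ [Suc k], q', \<mu>')" "prepass_state q'"
    and mem: "\<forall>w. w \<noteq> v @ [Suc k] \<longrightarrow>
      \<mu>' w = (if strict_prefix (v @ [Suc k]) w \<and> w \<in> nodes t then val w else \<mu> w)"
    and up: "comp_delta q' (lab t (v @ [Suc k])) (\<mu>' (v @ [Suc k])) = Some (leaf (qr, val (v @ [Suc k]), Up))"
      "prepass_state qr"
  shows "\<exists>\<mu>''. (prepass_step t)\<^sup>*\<^sup>* (v @ [Suc k], q, \<mu>) (v, qr, \<mu>'') \<and>
    (\<forall>w. \<mu>'' w = (if prefix (v @ [Suc k]) w \<and> w \<in> nodes t then val w else \<mu> w))"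
proof -
  have move: "move t (v @ [Suc k]) Up = Some v"
    by simp
  have "prepass_step t (v @ [Suc k], q', \<mu>') (v, qr, \<mu>'(v @ [Suc k] := val (v @ [Suc k])))"
    using visit(2) up by (intro prepass_stepI[OF c _ move]) simp_all
  moreover have "(\<mu>'(v @ [Suc k] := val (v @ [Suc k]))) w =
      (if prefix (v @ [Suc k]) w \<and> w \<in> nodes t then val w else \<mu> w)" for w
    using mem c by (cases "w = v @ [Suc k]") (simp_all add: strict_prefix_def)
  ultimately show ?thesis
    using visit(1) by (intro exI[of _ "\<mu>'(v @ [Suc k] := val (v @ [Suc k]))"] conjI allI) auto
qed

lemma collect_pass:
  assumes wf: "wf_tree \<Delta> t"
  shows "v \<in> nodes t \<Longrightarrow> \<forall>w. prefix v w \<longrightarrow> w \<in> nodes t \<longrightarrow> \<mu> w = Blank \<Longrightarrow>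
    \<exists>q' \<mu>'. (prepass_step t)\<^sup>*\<^sup>* (v, Down1 (v = []), \<mu>) (v, q', \<mu>') \<and> prepass_state q' \<and>
      comp_delta q' (lab t v) (\<mu>' v) = collect_delta (v = []) (lab t v) (child_states \<delta> t v) \<and>
      (\<forall>w. w \<noteq> v \<longrightarrow> \<mu>' w = (if strict_prefix v w \<and> w \<in> nodes t then Collected False (child_states \<delta> t w) else \<mu> w))"
proof (induction "size (subt t v)" arbitrary: v \<mu> rule: less_induct)
  case less
  note v = less.prems(1)
  define r where "r = (v = [])"
  define d where "d = lab t v"
  define S where "S = child_states \<delta> t v"
  have d: "d \<in> fst \<Delta>" and S: "length S = nchildren t v" "S \<in> state_lists"
    using wf_tree_lab[OF wf v] child_states_props[OF wf v] wf_tree_nchildren[OF wf v]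
    by (simp_all add: d_def S_def)
  have "\<exists>q' \<mu>'. (prepass_step t)\<^sup>*\<^sup>* (v, Down1 r, \<mu>) (v, q', \<mu>') \<and> prepass_state q' \<and>
      comp_delta q' d (\<mu>' v) = collect_delta r d (take (nchildren t v) S) \<and>
      (\<forall>w. w \<noteq> v \<longrightarrow> \<mu>' w = (if strict_prefix v w \<and> w \<in> nodes t then Collected False (child_states \<delta> t w) else \<mu> w))"
    unfolding d_def
  proof (rule prepass_children[OF v, where qc = "\<lambda>_. Down1 False" and M = "\<lambda>k. Collected r (take k S)"
        and qr = "\<lambda>k. Up1 (S ! k)"])
    show "comp_delta (Down1 r) (lab t v) (\<mu> v) = collect_delta r (lab t v) (take 0 S)"
      using less.prems d by (simp add: comp_delta_def d_def)
    show "collect_delta r (lab t v) (take k S) = Some (leaf (Down1 False, Collected r (take k S), Dn (Suc k)))"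
      if "k < nchildren t v" for k
      using that S wf_tree_nchildren[OF wf v] by (simp add: collect_delta_def)
    show "comp_delta (Up1 (S ! k)) (lab t v) (Collected r (take k S)) = collect_delta r (lab t v) (take (Suc k) S)"
      if "k < nchildren t v" for k
    proof -
      have "S ! k < N" "take k S \<in> state_lists"
        using that S subtree_state_less by (auto simp: S_def nth_child_states state_lists_def dest: in_set_takeD)
      then show ?thesis
        using that S d by (simp add: comp_delta_def d_def take_Suc_conv_app_nth)
    qed
    show "\<exists>\<mu>''. (prepass_step t)\<^sup>*\<^sup>* (v @ [Suc k], Down1 False, \<mu>') (v, Up1 (S ! k), \<mu>'') \<and>
        (\<forall>w. \<mu>'' w = (if prefix (v @ [Suc k]) w \<and> w \<in> nodes t then Collected False (child_states \<delta> t w) else \<mu>' w))"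
      if k: "k < nchildren t v" and agree: "\<forall>w. prefix (v @ [Suc k]) w \<longrightarrow> \<mu>' w = \<mu> w" for k \<mu>'
    proof -
      define c where "c = v @ [Suc k]"
      have c: "c \<in> nodes t"
        using child_in_nodes_iff[OF v] k by (simp add: c_def)
      have blank: "\<forall>w. prefix c w \<longrightarrow> w \<in> nodes t \<longrightarrow> \<mu>' w = Blank"
        using agree less.prems(2) by (auto simp: c_def prefix_def)
      have smaller: "size (subt t c) < size (subt t v)"
        using size_subt_child c by (simp add: c_def)
      have c_not_root: "(c = []) = False"
        by (simp add: c_def)
      obtain q'' \<mu>'' where visit: "(prepass_step t)\<^sup>*\<^sup>* (c, Down1 False, \<mu>') (c, q'', \<mu>'')" "prepass_state q''"
        "comp_delta q'' (lab t c) (\<mu>'' c) = collect_delta False (lab t c) (child_states \<delta> t c)"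
        "\<forall>w. w \<noteq> c \<longrightarrow> \<mu>'' w = (if strict_prefix c w \<and> w \<in> nodes t then Collected False (child_states \<delta> t w) else \<mu>' w)"
        using less.hyps[OF smaller c blank] unfolding c_not_root by blast
      have "\<delta> (lab t c) ({}, {}) (child_states \<delta> t c) = S ! k"
        using k by (simp add: S_def c_def nth_child_states subtree_state_unfold)
      then have "collect_delta False (lab t c) (child_states \<delta> t c) = Some (leaf (Up1 (S ! k), Collected False (child_states \<delta> t c), Up))"
        using child_states_props(1)[OF wf c] by (simp add: collect_delta_def)
      then show ?thesis
        using prepass_return[where val = "\<lambda>w. Collected False (child_states \<delta> t w)"] c visit
        unfolding c_def by simp
    qed
  qed simp_all
  then show ?case
    using S(1) by (simp add: r_def d_def S_def)
qed


lemma distribute_pass: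
  assumes wf: "wf_tree \<Delta> t"
  shows "v \<in> nodes t \<Longrightarrow> prepass_state q \<Longrightarrow>
    comp_delta q (lab t v) (\<mu> v) = distribute_delta (v = []) (ctx_table \<delta> N t v) (child_states \<delta> t v) (lab t v) 0 \<Longrightarrow>
    \<forall>w. strict_prefix v w \<longrightarrow> w \<in> nodes t \<longrightarrow> \<mu> w = Collected False (child_states \<delta> t w) \<Longrightarrow>
    \<exists>q' \<mu>'. (prepass_step t)\<^sup>*\<^sup>* (v, q, \<mu>) (v, q', \<mu>') \<and> prepass_state q' \<and>
      comp_delta q' (lab t v) (\<mu>' v) =
        distribute_delta (v = []) (ctx_table \<delta> N t v) (child_states \<delta> t v) (lab t v) (nchildren t v) \<and>
      (\<forall>w. w \<noteq> v \<longrightarrow> \<mu>' w = (if strict_prefix v w \<and> w \<in> nodes t then Labelled (lab (g t) w) (hm_top A) else \<mu> w))"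
proof (induction "size (subt t v)" arbitrary: v q \<mu> rule: less_induct)
  case less
  note v = less.prems(1)
  define r where "r = (v = [])"
  define d where "d = lab t v"
  define S where "S = child_states \<delta> t v"
  define T where "T = ctx_table \<delta> N t v"
  have d: "d \<in> fst \<Delta>" and S: "length S = nchildren t v" "S \<in> state_lists"
    using wf_tree_lab[OF wf v] child_states_props[OF wf v] wf_tree_nchildren[OF wf v]
    by (simp_all add: d_def S_def)
  have rank: "rank d = nchildren t v"
    using wf_tree_nchildren[OF wf v] by (simp add: d_def)
  show ?case
    unfolding r_def[symmetric] d_def[symmetric] S_def[symmetric] T_def[symmetric]
  proof (rule prepass_children[OF v, where qc = "\<lambda>k. Down2 (ctx_table \<delta> N t (v @ [Suc k]))"
        and M = "\<lambda>k. Passed r T S (Suc k)" and qr = "\<lambda>_. Up2", unfolded d_def[symmetric]])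
    show "comp_delta q d (\<mu> v) = distribute_delta r T S d 0"
      using less.prems(3) by (simp add: r_def d_def S_def T_def)
    show "distribute_delta r T S d k =
        Some (leaf (Down2 (ctx_table \<delta> N t (v @ [Suc k])), Passed r T S (Suc k), Dn (Suc k)))"
      if "k < nchildren t v" for k
      using that child_in_nodes_iff[OF v] rank child_ctx_table_ctx_table[OF \<delta>_less, of v k t]
      by (simp add: distribute_delta_def d_def S_def T_def)
    show "comp_delta Up2 d (Passed r T S (Suc k)) = distribute_delta r T S d (Suc k)"
      if "k < nchildren t v" for k
      using that d S rank rank_le_max_rank[OF d]
      by (simp add: comp_delta_def T_def ctx_table_in_tables)
    show "\<exists>\<mu>''. (prepass_step t)\<^sup>*\<^sup>* (v @ [Suc k], Down2 (ctx_table \<delta> N t (v @ [Suc k])), \<mu>') (v, Up2, \<mu>'') \<and>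
        (\<forall>w. \<mu>'' w = (if prefix (v @ [Suc k]) w \<and> w \<in> nodes t then Labelled (lab (g t) w) (hm_top A) else \<mu>' w))"
      if k: "k < nchildren t v" and agree: "\<forall>w. prefix (v @ [Suc k]) w \<longrightarrow> \<mu>' w = \<mu> w" for k \<mu>'
    proof -
      define c where "c = v @ [Suc k]"
      have c: "c \<in> nodes t"
        using child_in_nodes_iff[OF v] k by (simp add: c_def)
      have collected: "\<forall>w. strict_prefix c w \<longrightarrow> w \<in> nodes t \<longrightarrow> \<mu>' w = Collected False (child_states \<delta> t w)"
        using agree less.prems(4) by (auto simp: c_def strict_prefix_def prefix_def)
      have "strict_prefix v c"
        by (simp add: c_def strict_prefix_def)
      then have "\<mu> c = Collected False (child_states \<delta> t c)"
        using less.prems(4) c by blast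
      moreover have "\<mu>' c = \<mu> c"
        using agree by (simp add: c_def)
      ultimately have start: "comp_delta (Down2 (ctx_table \<delta> N t c)) (lab t c) (\<mu>' c) =
          distribute_delta (c = []) (ctx_table \<delta> N t c) (child_states \<delta> t c) (lab t c) 0"
        using child_states_props[OF wf c] wf_tree_lab[OF wf c]
        by (simp add: comp_delta_def ctx_table_in_tables c_def)
      have smaller: "size (subt t c) < size (subt t v)"
        using size_subt_child c by (simp add: c_def)
      obtain q'' \<mu>'' where visit: "(prepass_step t)\<^sup>*\<^sup>* (c, Down2 (ctx_table \<delta> N t c), \<mu>') (c, q'', \<mu>'')"
        "prepass_state q''"
        "comp_delta q'' (lab t c) (\<mu>'' c) =
          distribute_delta (c = []) (ctx_table \<delta> N t c) (child_states \<delta> t c) (lab t c) (nchildren t c)"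
        "\<forall>w. w \<noteq> c \<longrightarrow> \<mu>'' w = (if strict_prefix c w \<and> w \<in> nodes t then Labelled (lab (g t) w) (hm_top A) else \<mu>' w)"
        using less.hyps[OF smaller c _ start collected] by auto
      have "distribute_delta (c = []) (ctx_table \<delta> N t c) (child_states \<delta> t c) (lab t c) (nchildren t c) =
          Some (leaf (Up2, Labelled (lab (g t) c) (hm_top A), Up))"
        using wf_tree_nchildren[OF wf c] lab_g_from_ctx_table[OF wf c] lab_g_in_alphabet[OF wf c]
        by (simp add: distribute_delta_def c_def)
      then show ?thesis
        using prepass_return[where val = "\<lambda>w. Labelled (lab (g t) w) (hm_top A)"] c visit
        unfolding c_def by simp
    qed
  qed (simp_all add: less.prems(2))
qed


lemma prepass_run:
  assumes wf: "wf_tree \<Delta> t"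
  shows "\<exists>q \<mu>. (prepass_step t)\<^sup>*\<^sup>* (init_conf comp_hm) ([], q, \<mu>) \<and> prepass_state q \<and>
    comp_delta q (lab t []) (\<mu> []) = comp_delta (Sim (hm_init A)) (lab t []) (Labelled (lab (g t) []) (hm_top A)) \<and>
    (\<forall>w. w \<noteq> [] \<longrightarrow> w \<in> nodes t \<longrightarrow> \<mu> w = Labelled (lab (g t) w) (hm_top A))"
proof -
  have root: "[] \<in> nodes t"
    by simp
  obtain q1 \<mu>1 where pass1: "(prepass_step t)\<^sup>*\<^sup>* ([], Down1 True, \<lambda>_. Blank) ([], q1, \<mu>1)" "prepass_state q1"
    "comp_delta q1 (lab t []) (\<mu>1 []) = collect_delta True (lab t []) (child_states \<delta> t [])"
    "\<forall>w. w \<noteq> [] \<longrightarrow> \<mu>1 w = (if strict_prefix [] w \<and> w \<in> nodes t then Collected False (child_states \<delta> t w) else Blank)"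
    using collect_pass[OF wf root, of "\<lambda>_. Blank"] by auto
  have "collect_delta True (lab t []) (child_states \<delta> t []) =
      distribute_delta True (ctx_table \<delta> N t []) (child_states \<delta> t []) (lab t []) 0"
    using child_states_props(1)[OF wf root] by (simp add: collect_delta_def ctx_table_Nil)
  then have start: "comp_delta q1 (lab t []) (\<mu>1 []) =
      distribute_delta ([] = []) (ctx_table \<delta> N t []) (child_states \<delta> t []) (lab t []) 0"
    using pass1(3) by simp
  have collected: "\<forall>w. strict_prefix [] w \<longrightarrow> w \<in> nodes t \<longrightarrow> \<mu>1 w = Collected False (child_states \<delta> t w)"
    using pass1(4) by auto
  obtain q2 \<mu>2 where pass2: "(prepass_step t)\<^sup>*\<^sup>* ([], q1, \<mu>1) ([], q2, \<mu>2)" "prepass_state q2"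
    "comp_delta q2 (lab t []) (\<mu>2 []) =
      distribute_delta True (ctx_table \<delta> N t []) (child_states \<delta> t []) (lab t []) (nchildren t [])"
    "\<forall>w. w \<noteq> [] \<longrightarrow> \<mu>2 w = (if strict_prefix [] w \<and> w \<in> nodes t then Labelled (lab (g t) w) (hm_top A) else \<mu>1 w)"
    using distribute_pass[OF wf root pass1(2) start collected] by auto
  have "distribute_delta True (ctx_table \<delta> N t []) (child_states \<delta> t []) (lab t []) (nchildren t []) =
      sim_delta (hm_init A) (lab t []) (lab (g t) []) (hm_top A)"
    using wf_tree_nchildren[OF wf root] lab_g_from_ctx_table[OF wf root] lab_g_in_alphabet[OF wf root]
    by (simp add: distribute_delta_def)
  moreover have "comp_delta (Sim (hm_init A)) (lab t []) (Labelled (lab (g t) []) (hm_top A)) =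
      sim_delta (hm_init A) (lab t []) (lab (g t) []) (hm_top A)"
    using uTHM_A lab_g_in_alphabet[OF wf root] wf_tree_lab[OF wf root] by (simp add: comp_delta_def is_uTHM_def)
  moreover have "(prepass_step t)\<^sup>*\<^sup>* (init_conf comp_hm) ([], q2, \<mu>2)"
    using pass1(1) pass2(1) by (simp add: init_conf_def)
  ultimately show ?thesis
    using pass2(2,3,4) by (intro exI[of _ q2] exI[of _ \<mu>2]) (auto simp: strict_prefix_def)
qed

abbreviation sim_rel :: "'d rtree \<Rightarrow> ('q cstate, ('a, 'm) cmem) conf \<Rightarrow> ('q, 'm) conf \<Rightarrow> bool" where
  "sim_rel t \<equiv> mapped_conf Sim (\<lambda>w. Labelled (lab (g t) w)) (\<lambda>_. True) (\<lambda>_. True) (g t)"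

lemma step_simulation_comp_hm:
  assumes wf: "wf_tree \<Delta> t"
  shows "step_simulation comp_hm t A (g t) (sim_rel t)"
proof (rule step_simulation_mapped)
  show nodes: "nodes t = nodes (g t)"
    using nodes_g[OF wf] by simp
  show "hm_delta comp_hm (Sim q) (lab t u) (Labelled (lab (g t) u) m) =
      map_option (map_rtree (map_sum id (\<lambda>(q', m', d). (Sim q', Labelled (lab (g t) u) m', d))))
        (hm_delta A q (lab (g t) u) m)"
    if "u \<in> nodes (g t)" for u q m
  proof -
    have u: "u \<in> nodes t"
      using that nodes by simp
    have "rank (lab t u) = snd (hm_in A) (lab (g t) u)"
      using wf_tree_nchildren[OF wf u] nchildren_eq_if_nodes_eq[OF nodes u]
        wf_tree_nchildren[OF wf_tree_g[OF wf], of u] that by simp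
    moreover have "hm_delta A q (lab (g t) u) m = None" if "q \<notin> hm_states A \<or> m \<notin> hm_mem A"
      using uTHM_A that unfolding is_uTHM_def by (meson not_Some_eq)
    ultimately show ?thesis
      using wf_tree_lab[OF wf u] lab_g_in_alphabet[OF wf u] by (auto simp: comp_delta_def sim_delta_def)
  qed
qed simp

text \<open>Memory symbols are ordered by the phase they belong to and, within a phase, by the number of
  children already handled, so that every prepass step strictly increases the level of the memory
  of the node it leaves.\<close>

fun mem_level :: "('a, 'm) cmem \<Rightarrow> nat" where
  "mem_level Blank = 0"
| "mem_level (Collected r ss) = Suc (length ss)"
| "mem_level (Passed r tab ss i) = max_rank + 2 + i"
| "mem_level (Labelled \<sigma> m) = 2 * max_rank + 3"

lemma mem_level_le: "m \<in> cmems \<Longrightarrow> mem_level m \<le> 2 * max_rank + 3"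
  by (cases m) (auto simp: state_lists_def)

definition progress :: "'q cstate \<Rightarrow> ('a, 'm) cmem \<Rightarrow> ('c + ('q cstate \<times> ('a, 'm) cmem \<times> dir)) rtree \<Rightarrow> bool" where
  "progress q m r \<longleftrightarrow> (\<forall>q' m' d. Inr (q', m', d) \<in> set_rtree r \<longrightarrow>
     (prepass_state q' \<longrightarrow> r = leaf (q', m', d)) \<and> (\<not> prepass_state q \<longrightarrow> \<not> prepass_state q') \<and>
     mem_level m \<le> mem_level m' \<and> (prepass_state q \<longrightarrow> mem_level m < mem_level m'))"

lemma sim_delta_progress:
  assumes "sim_delta q d \<sigma> m = Some r" "mem_level m0 \<le> 2 * max_rank + 3"
    and "prepass_state q0 \<longrightarrow> mem_level m0 < 2 * max_rank + 3"
  shows "progress q0 m0 r"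
proof -
  obtain r0 where r: "r = map_rtree (map_sum id (\<lambda>(q', m', d'). (Sim q', Labelled \<sigma> m', d'))) r0"
    using assms(1) by (auto simp: sim_delta_def split: if_splits)
  have "\<exists>q'' m''. q' = Sim q'' \<and> m' = Labelled \<sigma> m''" if leaf_in: "Inr (q', m', d') \<in> set_rtree r" for q' m' d'
  proof -
    obtain x :: "'c + 'q \<times> 'm \<times> dir" where "Inr (q', m', d') = map_sum id (\<lambda>(q', m', d'). (Sim q', Labelled \<sigma> m', d')) x"
      using leaf_in unfolding r rtree.set_map by (rule imageE)
    then show ?thesis
      by (auto dest!: map_sum_id_eq_InrD[OF sym])
  qed
  then show ?thesis
    unfolding progress_def using assms(2,3) by fastforce
qed

lemma distribute_delta_progress:
  assumes "distribute_delta r tab ss d i = Some r'" "i < rank d \<longrightarrow> mem_level m0 < max_rank + 3 + i"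
    and "mem_level m0 < 2 * max_rank + 3" "prepass_state q0"
  shows "progress q0 m0 r'"
proof (cases "i < rank d")
  case True
  then show ?thesis
    using assms by (auto simp: distribute_delta_def progress_def)
next
  case False
  show ?thesis
  proof (cases r)
    case True
    then have "sim_delta (hm_init A) d (out (tab ! \<delta> d (UNIV, {}) ss)) (hm_top A) = Some r'"
      using assms(1) False by (auto simp: distribute_delta_def Let_def split: if_splits)
    then show ?thesis
      by (rule sim_delta_progress) (use assms in auto)
  next
    case False
    then show ?thesis
      using assms \<open>\<not> i < rank d\<close> by (auto simp: distribute_delta_def progress_def Let_def split: if_splits)
  qed
qed

lemma collect_delta_progress:
  assumes "collect_delta r d ss = Some r'" "mem_level m0 < Suc (length ss)" "d \<in> fst \<Delta>" "prepass_state q0"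
  shows "progress q0 m0 r'"
proof -
  have "length ss \<le> rank d \<Longrightarrow> length ss \<le> max_rank"
    using rank_le_max_rank[OF assms(3)] by simp
  then show ?thesis
    using assms distribute_delta_progress[of True "[0..<N]" ss d 0 r' m0 q0]
    by (auto simp: collect_delta_def progress_def split: if_splits)
qed

lemma comp_delta_progress:
  assumes "comp_delta q d m = Some r"
  shows "progress q m r"
proof -
  have d: "d \<in> fst \<Delta>" and m: "m \<in> cmems" and delta0: "comp_delta0 q d m = Some r"
    using assms by (auto simp: comp_delta_def split: if_splits)
  show ?thesis
  proof (cases q)
    case (Down1 b)
    then show ?thesis
      using delta0 d collect_delta_progress[of b d "[]" r m q] by (cases m) auto
  next
    case (Up1 s)
    then show ?thesis
      using delta0 d collect_delta_progress[of _ d _ r m q] by (cases m) auto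
  next
    case (Down2 tab)
    then show ?thesis
      using delta0 m distribute_delta_progress[of _ tab _ d 0 r m q] by (cases m) (auto simp: state_lists_def)
  next
    case Up2
    then show ?thesis
      using delta0 m distribute_delta_progress[of _ _ _ d _ r m q] by (cases m) auto
  next
    case (Sim q')
    then show ?thesis
      using delta0 sim_delta_progress[of q' d _ _ r m q] by (cases m) auto
  qed
qed


lemma prepass_end:
  assumes wf: "wf_tree \<Delta> t"
  shows "\<exists>q \<mu> \<mu>'. (prepass_step t)\<^sup>*\<^sup>* (init_conf comp_hm) ([], q, \<mu>) \<and> (\<nexists>C. prepass_step t ([], q, \<mu>) C) \<and>
    step comp_hm t ([], q, \<mu>) = step comp_hm t ([], Sim (hm_init A), \<mu>') \<and>
    sim_rel t ([], Sim (hm_init A), \<mu>') (init_conf A)"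
proof -
  obtain q \<mu> where pre: "(prepass_step t)\<^sup>*\<^sup>* (init_conf comp_hm) ([], q, \<mu>)"
    "comp_delta q (lab t []) (\<mu> []) = comp_delta (Sim (hm_init A)) (lab t []) (Labelled (lab (g t) []) (hm_top A))"
    "\<forall>w. w \<noteq> [] \<longrightarrow> w \<in> nodes t \<longrightarrow> \<mu> w = Labelled (lab (g t) w) (hm_top A)"
    using prepass_run[OF wf] by blast
  define \<mu>' where "\<mu>' = \<mu>([] := Labelled (lab (g t) []) (hm_top A))"
  have step: "step comp_hm t ([], q, \<mu>) = step comp_hm t ([], Sim (hm_init A), \<mu>')"
    by (rule step_cong) (use pre(2) in \<open>simp_all add: \<mu>'_def\<close>)
  have "\<nexists>C. prepass_step t ([], q, \<mu>) C"
  proof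
    assume "\<exists>C. prepass_step t ([], q, \<mu>) C"
    then obtain u' q' \<mu>'' where C: "prepass_step t ([], q, \<mu>) (u', q', \<mu>'')"
      by auto
    then have "step comp_hm t ([], Sim (hm_init A), \<mu>') = Some (leaf (u', q', \<mu>''))"
      using step by (simp add: prepass_step_def)
    then obtain r m' d where r: "comp_delta (Sim (hm_init A)) (lab t []) (\<mu>' []) = Some r"
      "Inr (q', m', d) \<in> set_rtree r"
      using step_leafD[of comp_hm t "[]" "Sim (hm_init A)" \<mu>' "leaf (u', q', \<mu>'')" u' q' \<mu>''] by auto
    have "\<not> prepass_state q'"
      using comp_delta_progress[OF r(1)] r(2) unfolding progress_def by auto
    then show False
      using C by (simp add: prepass_step_def)
  qed
  moreover have "sim_rel t ([], Sim (hm_init A), \<mu>') (init_conf A)"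
    using pre(3) nodes_g[OF wf] by (auto simp: init_conf_def \<mu>'_def)
  ultimately show ?thesis
    using pre(1) step by blast
qed

lemma hm_output_comp_hm:
  assumes wf: "wf_tree \<Delta> t"
  shows "hm_output comp_hm t = hm_output A (g t)"
proof -
  obtain q \<mu> \<mu>' where pre: "(prepass_step t)\<^sup>*\<^sup>* (init_conf comp_hm) ([], q, \<mu>)"
    and step: "step comp_hm t ([], q, \<mu>) = step comp_hm t ([], Sim (hm_init A), \<mu>')"
    and rel: "sim_rel t ([], Sim (hm_init A), \<mu>') (init_conf A)"
    using prepass_end[OF wf] by blast
  have eval: "evalC comp_hm t (init_conf comp_hm) s \<longleftrightarrow> evalC A (g t) (init_conf A) s" for s
  proof -
    have "evalC comp_hm t (init_conf comp_hm) s \<longleftrightarrow> evalC comp_hm t ([], q, \<mu>) s"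
      by (rule evalC_single_steps[OF prepass_steps_single_steps[OF pre]])
    also have "\<dots> \<longleftrightarrow> evalC comp_hm t ([], Sim (hm_init A), \<mu>') s"
      by (rule evalC_cong_step[OF step])
    also have "\<dots> \<longleftrightarrow> evalC A (g t) (init_conf A) s"
      by (rule evalC_simulation_iff[OF step_simulation_comp_hm[OF wf] rel])
    finally show ?thesis .
  qed
  show ?thesis
    unfolding hm_output_def eval ..
qed


lemma computes_comp_hm: "computes A f \<Longrightarrow> computes comp_hm (\<lambda>t. f (g t))"
  unfolding computes_def using hm_output_comp_hm wf_tree_g by simp

lemma branch_run_step:
  assumes "branch_run comp_hm t cs" "Suc i < length cs"
  shows "\<exists>r m' d. comp_delta (fst (snd (cs ! i))) (lab t (fst (cs ! i))) (snd (snd (cs ! i)) (fst (cs ! i))) = Some r \<and>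
     Inr (fst (snd (cs ! Suc i)), m', d) \<in> set_rtree r \<and>
     snd (snd (cs ! Suc i)) = (snd (snd (cs ! i)))(fst (cs ! i) := m')"
proof -
  obtain r where r: "step comp_hm t (cs ! i) = Some r" "Inr (cs ! Suc i) \<in> set_rtree r"
    using assms unfolding branch_run_def by blast
  obtain u q \<mu> where "cs ! i = (u, q, \<mu>)"
    by (cases "cs ! i") auto
  moreover obtain u' q' \<mu>' where "cs ! Suc i = (u', q', \<mu>')"
    by (cases "cs ! Suc i") auto
  ultimately show ?thesis
    using step_leafD[of comp_hm t u q \<mu> r u' q' \<mu>'] r by auto
qed

lemma branch_run_init: "branch_run comp_hm t cs \<Longrightarrow> cs ! 0 = ([], Down1 True, \<lambda>_. Blank)"
  unfolding branch_run_def init_conf_def by (cases cs) auto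

lemma branch_run_mem:
  assumes "branch_run comp_hm t cs"
  shows "i < length cs \<Longrightarrow> snd (snd (cs ! i)) v \<in> cmems"
proof (induction i arbitrary: v)
  case 0
  then show ?case
    using branch_run_init[OF assms] by simp
next
  case (Suc i)
  obtain r m' d where step: "comp_delta (fst (snd (cs ! i))) (lab t (fst (cs ! i))) (snd (snd (cs ! i)) (fst (cs ! i))) = Some r"
    "Inr (fst (snd (cs ! Suc i)), m', d) \<in> set_rtree r" "snd (snd (cs ! Suc i)) = (snd (snd (cs ! i)))(fst (cs ! i) := m')"
    using branch_run_step[OF assms Suc.prems] by blast
  have "m' \<in> cmems"
    using comp_delta_ok[OF step(1)] wf_tree_Y_setD step(2) unfolding delta_ok_def by fastforce
  then show ?case
    using step(3) Suc by simp
qed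

lemma branch_run_progress:
  assumes "branch_run comp_hm t cs" "Suc i < length cs"
  shows "mem_level (snd (snd (cs ! i)) v) \<le> mem_level (snd (snd (cs ! Suc i)) v)"
    and "prepass_state (fst (snd (cs ! i))) \<Longrightarrow>
      mem_level (snd (snd (cs ! i)) (fst (cs ! i))) < mem_level (snd (snd (cs ! Suc i)) (fst (cs ! i)))"
    and "\<not> prepass_state (fst (snd (cs ! i))) \<Longrightarrow> \<not> prepass_state (fst (snd (cs ! Suc i)))"
proof -
  obtain r m' d where step: "comp_delta (fst (snd (cs ! i))) (lab t (fst (cs ! i))) (snd (snd (cs ! i)) (fst (cs ! i))) = Some r"
    "Inr (fst (snd (cs ! Suc i)), m', d) \<in> set_rtree r" "snd (snd (cs ! Suc i)) = (snd (snd (cs ! i)))(fst (cs ! i) := m')"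
    using branch_run_step[OF assms] by blast
  have "progress (fst (snd (cs ! i))) (snd (snd (cs ! i)) (fst (cs ! i))) r"
    by (rule comp_delta_progress[OF step(1)])
  then have le: "mem_level (snd (snd (cs ! i)) (fst (cs ! i))) \<le> mem_level m'"
    and less: "prepass_state (fst (snd (cs ! i))) \<Longrightarrow> mem_level (snd (snd (cs ! i)) (fst (cs ! i))) < mem_level m'"
    and sim: "\<not> prepass_state (fst (snd (cs ! i))) \<Longrightarrow> \<not> prepass_state (fst (snd (cs ! Suc i)))"
    using step(2) unfolding progress_def by blast+
  show "mem_level (snd (snd (cs ! i)) v) \<le> mem_level (snd (snd (cs ! Suc i)) v)"
    using le step(3) by (cases "v = fst (cs ! i)") auto
  show "prepass_state (fst (snd (cs ! i))) \<Longrightarrow>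
      mem_level (snd (snd (cs ! i)) (fst (cs ! i))) < mem_level (snd (snd (cs ! Suc i)) (fst (cs ! i)))"
    using less step(3) by simp
  show "\<not> prepass_state (fst (snd (cs ! i))) \<Longrightarrow> \<not> prepass_state (fst (snd (cs ! Suc i)))"
    by (rule sim)
qed

lemma branch_run_level_mono:
  assumes "branch_run comp_hm t cs"
  shows "i \<le> j \<Longrightarrow> j < length cs \<Longrightarrow> mem_level (snd (snd (cs ! i)) v) \<le> mem_level (snd (snd (cs ! j)) v)"
proof (induction j)
  case (Suc j)
  then show ?case
    using branch_run_progress(1)[OF assms, of j v] by (cases "i = Suc j") auto
qed simp

lemma branch_run_prepass_step:
  assumes run: "branch_run comp_hm t cs" and i: "Suc i < length cs" and pre: "prepass_state (fst (snd (cs ! Suc i)))"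
  shows "prepass_step t (cs ! i) (cs ! Suc i)"
proof -
  obtain r where r: "step comp_hm t (cs ! i) = Some r" "Inr (cs ! Suc i) \<in> set_rtree r"
    using run i unfolding branch_run_def by blast
  obtain r' m' d where step: "comp_delta (fst (snd (cs ! i))) (lab t (fst (cs ! i))) (snd (snd (cs ! i)) (fst (cs ! i))) = Some r'"
    "Inr (fst (snd (cs ! Suc i)), m', d) \<in> set_rtree r'"
    using branch_run_step[OF run i] by blast
  have "r' = leaf (fst (snd (cs ! Suc i)), m', d)"
    using comp_delta_progress[OF step(1)] step(2) pre unfolding progress_def by blast
  moreover obtain u q \<mu> where C: "cs ! i = (u, q, \<mu>)"
    by (cases "cs ! i") auto
  ultimately have delta: "hm_delta comp_hm q (lab t u) (\<mu> u) = Some (leaf (fst (snd (cs ! Suc i)), m', d))"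
    using step(1) by simp
  have step_u: "step comp_hm t (u, q, \<mu>) = Some r"
    using r(1) C by simp
  obtain y where "r = leaf y"
    using step_leaf_result[OF step_u delta] by blast
  then have "r = leaf (cs ! Suc i)"
    using r(2) by (simp add: leaf_def)
  then show ?thesis
    using r(1) pre branch_run_progress(3)[OF run i] by (auto simp: prepass_step_def)
qed

lemma branch_run_prepass_prefix:
  assumes "branch_run comp_hm t cs"
  shows "i < length cs \<Longrightarrow> \<forall>j\<le>i. prepass_state (fst (snd (cs ! j))) \<Longrightarrow> (prepass_step t)\<^sup>*\<^sup>* (init_conf comp_hm) (cs ! i)"
proof (induction i)
  case 0
  then show ?case
    using branch_run_init[OF assms] by (simp add: init_conf_def)
next
  case (Suc i)
  then show ?case
    using branch_run_prepass_step[OF assms Suc.prems(1)] by (auto intro: rtranclp.rtrancl_into_rtrancl)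
qed


lemma prepass_visits_le:
  assumes run: "branch_run comp_hm t cs"
  shows "card {i. Suc i < length cs \<and> fst (cs ! i) = u \<and> prepass_state (fst (snd (cs ! i)))} \<le> 2 * max_rank + 3"
proof (rule card_le_if_strictly_increasing[where f = "\<lambda>i. mem_level (snd (snd (cs ! i)) u)" and n = "length cs"])
  show "mem_level (snd (snd (cs ! i)) u) \<le> mem_level (snd (snd (cs ! j)) u)" if "i \<le> j" "j < length cs" for i j
    using branch_run_level_mono[OF run that] .
  show "Suc i < length cs \<and> mem_level (snd (snd (cs ! i)) u) < mem_level (snd (snd (cs ! Suc i)) u)"
    if "i \<in> {i. Suc i < length cs \<and> fst (cs ! i) = u \<and> prepass_state (fst (snd (cs ! i)))}" for i
    using that branch_run_progress(2)[OF run, of i] by auto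
  show "mem_level (snd (snd (cs ! i)) u) \<le> 2 * max_rank + 3" if "i < length cs" for i
    using mem_level_le[OF branch_run_mem[OF run that]] .
qed

text \<open>Once a run reaches a simulation state, it continues as a run of \<open>A\<close> on \<open>g t\<close>: by determinism
  of the prepass, the preceding configuration is the one in which the prepass ends.\<close>

lemma branch_run_simulation_suffix:
  assumes wf: "wf_tree \<Delta> t" and run: "branch_run comp_hm t cs"
    and i0: "Suc e < length cs" "\<not> prepass_state (fst (snd (cs ! Suc e)))"
    and before: "\<forall>j\<le>e. prepass_state (fst (snd (cs ! j)))"
  shows "\<exists>ds. branch_run A (g t) (init_conf A # ds) \<and> list_all2 (sim_rel t) (drop (Suc e) cs) ds"
proof -
  obtain q \<mu> \<mu>' where pre: "(prepass_step t)\<^sup>*\<^sup>* (init_conf comp_hm) ([], q, \<mu>)" "\<nexists>C. prepass_step t ([], q, \<mu>) C"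
    and step: "step comp_hm t ([], q, \<mu>) = step comp_hm t ([], Sim (hm_init A), \<mu>')"
    and rel: "sim_rel t ([], Sim (hm_init A), \<mu>') (init_conf A)"
    using prepass_end[OF wf] by blast
  have "(prepass_step t)\<^sup>*\<^sup>* (init_conf comp_hm) (cs ! e)"
    using i0(1) before by (intro branch_run_prepass_prefix[OF run]) simp_all
  moreover have "\<nexists>C. prepass_step t (cs ! e) C"
  proof
    assume "\<exists>C. prepass_step t (cs ! e) C"
    then obtain C where C: "prepass_step t (cs ! e) C" ..
    obtain r where "step comp_hm t (cs ! e) = Some r" "Inr (cs ! Suc e) \<in> set_rtree r"
      using run i0(1) unfolding branch_run_def by blast
    then have "C = cs ! Suc e"
      using C by (simp add: prepass_step_def leaf_def)
    then show False
      using C i0(2) by (simp add: prepass_step_def)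
  qed
  ultimately have "cs ! e = ([], q, \<mu>)"
    using rtranclp_deterministic_normal_form_unique[of "prepass_step t"] prepass_step_det pre by blast
  then have "drop e cs = ([], q, \<mu>) # drop (Suc e) cs"
    using Cons_nth_drop_Suc[of e cs] i0(1) by simp
  moreover have "step_chain comp_hm t (drop e cs)"
    using run step_chain_drop unfolding branch_run_iff_step_chain by blast
  ultimately have "step_chain comp_hm t (([], Sim (hm_init A), \<mu>') # drop (Suc e) cs)"
    using step_chain_cong_head[OF step] by simp
  then show ?thesis
    using step_chain_simulation[OF step_simulation_comp_hm[OF wf] _ rel]
    unfolding branch_run_iff_step_chain by simp
qed

lemma simulation_visits_le:
  assumes wf: "wf_tree \<Delta> t" and run: "branch_run comp_hm t cs"
    and bound: "\<And>ds. branch_run A (g t) ds \<Longrightarrow> visits ds u \<le> K"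
  shows "card {i. i < length cs \<and> fst (cs ! i) = u \<and> \<not> prepass_state (fst (snd (cs ! i)))} \<le> K"
proof (cases "\<exists>i. i < length cs \<and> \<not> prepass_state (fst (snd (cs ! i)))")
  case False
  then have empty: "{i. i < length cs \<and> fst (cs ! i) = u \<and> \<not> prepass_state (fst (snd (cs ! i)))} = {}"
    by blast
  show ?thesis
    unfolding empty by simp
next
  case True
  define P where "P i \<longleftrightarrow> i < length cs \<and> \<not> prepass_state (fst (snd (cs ! i)))" for i
  define i0 where "i0 = (LEAST i. P i)"
  obtain i where "P i"
    using True unfolding P_def by blast
  then have P_i0: "P i0"
    unfolding i0_def by (rule LeastI)
  have before_i0: "\<not> P j" if "j < i0" for j
    using not_less_Least[OF that[unfolded i0_def]] .
  have "i0 \<noteq> 0"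
    using P_i0 branch_run_init[OF run] by (cases i0) (auto simp: P_def)
  then obtain e where e: "i0 = Suc e"
    using not0_implies_Suc by blast
  have "\<forall>j\<le>e. prepass_state (fst (snd (cs ! j)))"
  proof (intro allI impI)
    fix j assume "j \<le> e"
    then have "j < i0" "j < length cs"
      using e P_i0 by (simp_all add: P_def)
    then show "prepass_state (fst (snd (cs ! j)))"
      using before_i0[of j] by (simp add: P_def)
  qed
  then obtain ds where ds: "branch_run A (g t) (init_conf A # ds)" "list_all2 (sim_rel t) (drop i0 cs) ds"
    using branch_run_simulation_suffix[OF wf run] P_i0 e by (auto simp: P_def)
  have "{i. i < length cs \<and> fst (cs ! i) = u \<and> \<not> prepass_state (fst (snd (cs ! i)))} \<subseteq>
      {i. i0 \<le> i \<and> i < length cs \<and> fst (cs ! i) = u}"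
    using Least_le[of P] unfolding i0_def P_def by fastforce
  then have "card {i. i < length cs \<and> fst (cs ! i) = u \<and> \<not> prepass_state (fst (snd (cs ! i)))} \<le>
      visits (drop i0 cs) u"
    unfolding visits_drop[symmetric] by (rule card_mono[rotated]) simp
  also have "\<dots> = visits ds u"
    using ds(2) by (intro visits_eq_if_positions_eq) (auto elim: list_all2_mono dest: mapped_conf_fst)
  also have "\<dots> \<le> visits (init_conf A # ds) u"
    by (rule visits_le_visits_Cons)
  also have "\<dots> \<le> K"
    using ds(1) bound by simp
  finally show ?thesis .
qed

lemma is_THM_comp_hm:
  assumes "is_THM A"
  shows "is_THM comp_hm"
proof -
  obtain K where K: "\<And>t ds u. wf_tree (hm_in A) t \<Longrightarrow> branch_run A t ds \<Longrightarrow> visits ds u \<le> K"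
    using assms unfolding is_THM_iff_visits by blast
  have bound: "visits cs u \<le> (2 * max_rank + 3) + 1 + K" if wf: "wf_tree \<Delta> t" and run: "branch_run comp_hm t cs"
    for t cs u
  proof -
    define I where "I = {i. Suc i < length cs \<and> fst (cs ! i) = u \<and> prepass_state (fst (snd (cs ! i)))}"
    define J where "J = {i. i < length cs \<and> fst (cs ! i) = u \<and> \<not> prepass_state (fst (snd (cs ! i)))}"
    have finite: "finite I" "finite J"
      unfolding I_def J_def by (rule finite_subset[of _ "{..<length cs}"], auto)+
    have "visits cs u \<le> card (insert (length cs - 1) I \<union> J)"
      unfolding visits_def using finite by (intro card_mono) (auto simp: I_def J_def)
    also have "\<dots> \<le> card (insert (length cs - 1) I) + card J"
      by (rule card_Un_le)
    also have "\<dots> \<le> card I + 1 + card J"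
      using finite(1) by (simp add: card_insert_if)
    also have "\<dots> \<le> (2 * max_rank + 3) + 1 + K"
    proof -
      have "card I \<le> 2 * max_rank + 3"
        unfolding I_def by (rule prepass_visits_le[OF run])
      moreover have "card J \<le> K"
        unfolding J_def by (rule simulation_visits_le[OF wf run]) (rule K[OF wf_tree_g[OF wf]])
      ultimately show ?thesis
        by linarith
    qed
    finally show ?thesis .
  qed
  show ?thesis
    unfolding is_THM_iff_visits comp_hm_simps
    by (intro conjI is_uTHM_comp_hm exI[of _ "(2 * max_rank + 3) + 1 + K"] allI impI bound)
qed

end

theorem mainTheorem17:
  fixes A :: "('q, 'm, 'a, 'c) hm"
    and f :: "'a rtree \<Rightarrow> 'c rtree option"
    and g :: "'d rtree \<Rightarrow> 'a rtree"
    and \<Delta> :: "'d ralph"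
  assumes "finite (fst \<Delta>)"
    and "mso_relabeling \<Delta> (hm_in A) g"
    and "is_uTHM A"
    and "computes A f"
  shows "(\<exists>B :: (nat, nat, 'd, 'c) hm.
            is_uTHM B \<and> hm_in B = \<Delta> \<and> hm_outa B = hm_outa A \<and> computes B (\<lambda>t. f (g t)))
       \<and> (is_THM A \<longrightarrow>
          (\<exists>B :: (nat, nat, 'd, 'c) hm.
            is_THM B \<and> hm_in B = \<Delta> \<and> hm_outa B = hm_outa A \<and> computes B (\<lambda>t. f (g t))))"
proof -
  have "finite (fst (hm_in A))"
    using assms(3) unfolding is_uTHM_def by blast
  then obtain \<delta> :: "'d bta" and N out where \<delta>: "\<forall>a m cs. \<delta> a m cs < N"
    and out: "\<forall>t. wf_tree \<Delta> t \<longrightarrow> (\<forall>u\<in>nodes t. lab (g t) u = out (bta_run \<delta> (node_mark u) t))"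
    using mso_relabeling_bta[OF _ assms(2)] by blast
  interpret relabel_precomp A \<Delta> g \<delta> N out
    using assms(1,3) \<delta> out assms(2) unfolding mso_relabeling_def by unfold_locales blast+
  obtain B :: "(nat, nat, 'd, 'c) hm" where B: "is_uTHM B" "hm_in B = \<Delta>" "hm_outa B = hm_outa A"
    "\<And>t. hm_output B t = hm_output comp_hm t" "is_THM comp_hm \<Longrightarrow> is_THM B"
    using ex_nat_hm[OF is_uTHM_comp_hm] by auto
  have "computes B (\<lambda>t. f (g t))"
    using computes_comp_hm[OF assms(4)] B(2,4) by (simp add: computes_def)
  then show ?thesis
    using B is_THM_comp_hm by blast
qed

end
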